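(* Let $\alpha=2^s$ with $s\in\mathbb{Z}$. Let $c_1:\mathcal{C}_\ast(\mathcal{R}^\infty_\alpha)\to\mathcal{C}_\ast(\mathcal{X}_{2\alpha})$ be any augmentation-preserving chain map carried by $C_1^{2\alpha}$, and let $c_2:\mathcal{C}_\ast(\mathcal{X}_{2\alpha})\to\mathcal{C}_\ast(\mathcal{R}^\infty_{2\alpha})$ be any augmentation-preserving chain map carried by $C_2^{2\alpha}$. Then $inc^\ast=c_2^\ast\circ c_1^\ast$ as maps $H(\mathcal{R}^\infty_\alpha)\to H(\mathcal{R}^\infty_{2\alpha})$, where $inc^\ast$ is induced by the inclusion $\mathcal{R}^\infty_\alpha\subseteq\mathcal{R}^\infty_{2\alpha}$.
   Context: Scales $\alpha_s=2^s$, $s\in\mathbb{Z}$. Grids $G_{\alpha_s}\subset\mathbb{R}^d$: $G_{1}=\mathbb{Z}^d$ and $G_{\alpha_{s+1}}=2(G_{\alpha_s}-O_s)+O_s+\frac{\alpha_s}{2}\varepsilon_s$ with $O_s\in G_{\alpha_s}$, $\varepsilon_s\in\{-1,1\}^d$. $\square_{\alpha}$: cubical complex of faces $\prod_j[x_j,x_j+m_j]$, $x\in G_\alpha$, $m_j\in\{0,\alpha\}$. $P\subset\mathbb{R}^d$ finite; $a_\alpha(p)$ is the point of $G_\alpha$ whose Voronoi cell (cube of side $\alpha$ centered at it) contains $p$ (assumed unique); active vertices $V_\alpha=a_\alpha(P)$. A face $f$ is spanned by $V\subseteq G_\alpha$ if $f\cap V\neq\emptyset$ and $f\cap V$ lies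 in no facet of $f$. Active faces: faces spanned by $V_\alpha$. The barycentric subdivision has as simplices the flags $f_0\subsetneq\cdots\subsetneq f_k$ of faces of $\square_\alpha$; $sd(f)$ is the subcomplex of flags of faces contained in $f$. The barycentric span of $V\subseteq G_\alpha$ is the union of $sd(f)$ over the maximal faces $f$ spanned by $V$; $\mathcal{X}_\alpha$ is the barycentric span of $V_\alpha$. $\mathcal{R}^\infty_\alpha$ is the simplicial complex on $P$ whose simplices are the non-empty subsets of $L_\infty$-diameter at most $2\alpha$. Carriers: $C_1^\alpha:\mathcal{R}^\infty_{\alpha/2}\to\mathcal{X}_\alpha$ sends $\{p_0,\dots,p_k\}$ to the barycentric span of $\{a_\alpha(p_0),\dots,a_\alpha(p_k)\}$; $C_2^\alpha:\mathcal{X}_\alpha\to\mathcal{R}^\infty_\alpha$ sends a flag $\sigma$ to the full simplex on $\{p\in P: a_\alpha(p)\text{ is a vertex of }E\}$, $E$ the smallest active face containing all faces of $\sigma$ (ties broken by a fixed total order on active faces). Chain complexes are augmented simplicial chain complexes over a field ($\mathcal{C}_{-1}=$ the field); augmentation-preserving means identity in degree $-1$; a chain map is carried by a carrier $\Phi$ if the image of each simplex $\sigma$ is supported on simplices of $\Phi(\sigma)$. $H$ denotes reduced homology. *)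

theory Defs
  imports Complex_Main "HOL-Library.List_Lexorder" "HOL-Library.Product_Lexorder"
begin

text \<open>A face of the cubical complex at
scale alpha is represented by a pair (x, m): x a grid point, m a list with entries in {0, alpha};
it stands for the box prod_j [x_j, x_j + m_j].\<close>

type_synonym point = "real list"
type_synonym face = "real list \<times> real list"

definition scale :: "int \<Rightarrow> real" where
  "scale s = 2 powr (real_of_int s)"

definition grid_system :: "nat \<Rightarrow> (int \<Rightarrow> point set) \<Rightarrow> bool" where
  "grid_system d G \<longleftrightarrow>
     G 0 = {x. length x = d \<and> (\<forall>j<d. x ! j \<in> \<int>)} \<and>
     (\<forall>s. \<exists>ctr \<in> G s. \<exists>\<epsilon>. length \<epsilon> = d \<and> set \<epsilon> \<subseteq> {-1, 1} \<and>
        G (s + 1) = (\<lambda>x. map (\<lambda>j. 2 * (x ! j - ctr ! j) + ctr ! j + scale s / 2 * \<epsilon> ! j) [0..<d]) ` G s)"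

definition in_cell :: "nat \<Rightarrow> int \<Rightarrow> point \<Rightarrow> point \<Rightarrow> bool" where
  "in_cell d s g p \<longleftrightarrow> (\<forall>j<d. \<bar>p ! j - g ! j\<bar> \<le> scale s / 2)"

definition unique_voronoi :: "nat \<Rightarrow> (int \<Rightarrow> point set) \<Rightarrow> point set \<Rightarrow> bool" where
  "unique_voronoi d G P \<longleftrightarrow> (\<forall>s. \<forall>p\<in>P. \<exists>!g. g \<in> G s \<and> in_cell d s g p)"

definition avor :: "nat \<Rightarrow> (int \<Rightarrow> point set) \<Rightarrow> int \<Rightarrow> point \<Rightarrow> point" where
  "avor d G s p = (THE g. g \<in> G s \<and> in_cell d s g p)"

definition is_face :: "nat \<Rightarrow> (int \<Rightarrow> point set) \<Rightarrow> int \<Rightarrow> face \<Rightarrow> bool" where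
  "is_face d G s f \<longleftrightarrow> fst f \<in> G s \<and> length (snd f) = d \<and> set (snd f) \<subseteq> {0, scale s}"

definition face_set :: "face \<Rightarrow> point set" where
  "face_set f = {y. length y = length (fst f) \<and>
      (\<forall>j<length (fst f). fst f ! j \<le> y ! j \<and> y ! j \<le> fst f ! j + snd f ! j)}"

definition fdim :: "face \<Rightarrow> nat" where
  "fdim f = card {j. j < length (snd f) \<and> snd f ! j \<noteq> 0}"

definition is_facet :: "nat \<Rightarrow> (int \<Rightarrow> point set) \<Rightarrow> int \<Rightarrow> face \<Rightarrow> face \<Rightarrow> bool" where
  "is_facet d G s g f \<longleftrightarrow> is_face d G s g \<and> face_set g \<subseteq> face_set f \<and> fdim g + 1 = fdim f"

definition spanned :: "nat \<Rightarrow> (int \<Rightarrow> point set) \<Rightarrow> int \<Rightarrow> point set \<Rightarrow> face \<Rightarrow> bool" where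
  "spanned d G s V f \<longleftrightarrow> is_face d G s f \<and> face_set f \<inter> V \<noteq> {} \<and>
     (\<forall>g. is_facet d G s g f \<longrightarrow> \<not> (face_set f \<inter> V \<subseteq> face_set g))"

definition max_spanned :: "nat \<Rightarrow> (int \<Rightarrow> point set) \<Rightarrow> int \<Rightarrow> point set \<Rightarrow> face \<Rightarrow> bool" where
  "max_spanned d G s V f \<longleftrightarrow> spanned d G s V f \<and>
     \<not> (\<exists>f'. spanned d G s V f' \<and> face_set f \<subset> face_set f')"

text \<open>Simplices of the barycentric subdivision contained in f: nonempty flags of faces of f.\<close>
definition sd :: "nat \<Rightarrow> (int \<Rightarrow> point set) \<Rightarrow> int \<Rightarrow> face \<Rightarrow> face set set" where
  "sd d G s f = {F. F \<noteq> {} \<and> finite F \<and>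
      (\<forall>g\<in>F. is_face d G s g \<and> face_set g \<subseteq> face_set f) \<and>
      (\<forall>g\<in>F. \<forall>h\<in>F. face_set g \<subseteq> face_set h \<or> face_set h \<subseteq> face_set g)}"

definition bspan :: "nat \<Rightarrow> (int \<Rightarrow> point set) \<Rightarrow> int \<Rightarrow> point set \<Rightarrow> face set set" where
  "bspan d G s V = \<Union> {sd d G s f | f. max_spanned d G s V f}"

definition active_faces :: "nat \<Rightarrow> (int \<Rightarrow> point set) \<Rightarrow> point set \<Rightarrow> int \<Rightarrow> face set" where
  "active_faces d G P s = {f. spanned d G s (avor d G s ` P) f}"

definition Xcplx :: "nat \<Rightarrow> (int \<Rightarrow> point set) \<Rightarrow> point set \<Rightarrow> int \<Rightarrow> face set set" where
  "Xcplx d G P s = bspan d G s (avor d G s ` P)"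

text \<open>Vietoris-Rips complex for the L-infinity metric, parameter alpha (diameter at most 2 alpha).\<close>
definition Rinf :: "point set \<Rightarrow> real \<Rightarrow> point set set" where
  "Rinf P \<alpha> = {S. S \<noteq> {} \<and> S \<subseteq> P \<and>
      (\<forall>p\<in>S. \<forall>q\<in>S. \<forall>j<length p. \<bar>p ! j - q ! j\<bar> \<le> 2 * \<alpha>)}"

definition C1 :: "nat \<Rightarrow> (int \<Rightarrow> point set) \<Rightarrow> int \<Rightarrow> point set \<Rightarrow> face set set" where
  "C1 d G s \<sigma> = bspan d G s (avor d G s ` \<sigma>)"

definition smallest_active ::
  "nat \<Rightarrow> (int \<Rightarrow> point set) \<Rightarrow> point set \<Rightarrow> (face \<times> face) set \<Rightarrow> int \<Rightarrow> face set \<Rightarrow> face" where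
  "smallest_active d G P r s \<sigma> =
    (let cands = {f \<in> active_faces d G P s. \<forall>g\<in>\<sigma>. face_set g \<subseteq> face_set f}
     in THE E. E \<in> cands \<and>
          (\<forall>E'\<in>cands. fdim E < fdim E' \<or> (fdim E = fdim E' \<and> (E, E') \<in> r)))"

definition full_simplex :: "'v set \<Rightarrow> 'v set set" where
  "full_simplex S = {T. T \<noteq> {} \<and> T \<subseteq> S}"

definition C2 ::
  "nat \<Rightarrow> (int \<Rightarrow> point set) \<Rightarrow> point set \<Rightarrow> (face \<times> face) set \<Rightarrow> int \<Rightarrow> face set \<Rightarrow> point set set" where
  "C2 d G P r s \<sigma> =
     full_simplex {p \<in> P. avor d G s p \<in> face_set (smallest_active d G P r s \<sigma>)}"

text \<open>A chain is a finitely supported function on finite vertex sets; the empty set is the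
unique simplex of degree -1, a simplex sigma has degree card sigma - 1. Orientation is given by
the linear order on vertices.\<close>

definition bd :: "'v::linorder set \<Rightarrow> 'v set \<Rightarrow> 'k::field" where
  "bd \<sigma> = (\<lambda>\<tau>. \<Sum>i<card \<sigma>. if \<tau> = \<sigma> - {sorted_list_of_set \<sigma> ! i} then (-1) ^ i else 0)"

definition supp :: "('a \<Rightarrow> 'k::zero) \<Rightarrow> 'a set" where
  "supp x = {\<sigma>. x \<sigma> \<noteq> 0}"

definition ext :: "('a \<Rightarrow> 'b \<Rightarrow> 'k::field) \<Rightarrow> ('a \<Rightarrow> 'k) \<Rightarrow> 'b \<Rightarrow> 'k" where
  "ext c x = (\<lambda>\<tau>. \<Sum>\<sigma>\<in>supp x. x \<sigma> * c \<sigma> \<tau>)"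

definition bdc :: "('v::linorder set \<Rightarrow> 'k::field) \<Rightarrow> 'v set \<Rightarrow> 'k" where
  "bdc x = ext bd x"

definition is_chain :: "'v set set \<Rightarrow> ('v set \<Rightarrow> 'k::zero) \<Rightarrow> bool" where
  "is_chain K x \<longleftrightarrow> finite (supp x) \<and> supp x \<subseteq> insert {} K"

definition homog :: "nat \<Rightarrow> ('v set \<Rightarrow> 'k::zero) \<Rightarrow> bool" where
  "homog n x \<longleftrightarrow> (\<forall>\<sigma>\<in>supp x. card \<sigma> = n)"

definition aug_chain_map ::
  "'v::linorder set set \<Rightarrow> 'w::linorder set set \<Rightarrow> ('v set \<Rightarrow> 'w set \<Rightarrow> 'k::field) \<Rightarrow> bool" where
  "aug_chain_map K L c \<longleftrightarrow>
     (\<forall>\<sigma>\<in>insert {} K. is_chain L (c \<sigma>) \<and> homog (card \<sigma>) (c \<sigma>) \<and> bdc (c \<sigma>) = ext c (bd \<sigma>)) \<and>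
     c {} = (\<lambda>\<tau>. if \<tau> = {} then 1 else 0)"

definition carried :: "'v set set \<Rightarrow> ('v set \<Rightarrow> 'w set \<Rightarrow> 'k::zero) \<Rightarrow> ('v set \<Rightarrow> 'w set set) \<Rightarrow> bool" where
  "carried K c \<Phi> \<longleftrightarrow> (\<forall>\<sigma>\<in>K. supp (c \<sigma>) \<subseteq> \<Phi> \<sigma>)"

end

(*
  Both the inclusion R_alpha <= R_2alpha and the composite c2 o c1 are carried by the acyclic carrier
  that sends a simplex sigma to the full simplex on W sigma: the points of P whose vertex in the grid
  of scale 2 alpha lies in the coordinatewise bounding box of the vertices of sigma.  For c1 sigma
  lives on flags of faces spanned by the vertices of sigma; the chain map identity forces c2 of a
  flag of faces of such a face f onto points with vertex in f (because c2 is carried by the smallest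
  active face containing the flag); and f lies in the bounding box, since it meets the vertices of
  sigma on both facets across each of its directions.  Vertices of points at L-infinity distance
  2 alpha differ by at most 2 alpha, so W sigma has diameter at most 4 alpha and is a simplex of
  R_2alpha.  A cone construction over the least vertex of W sigma, simplex by simplex, then gives a
  chain homotopy between the inclusion and c2 o c1, so z - c2 (c1 z) bounds for every cycle z.
*)
theory Submission
  imports Defs
begin

section \<open>Chains: linear extension and boundary\<close>

definition delta :: "'a \<Rightarrow> 'a \<Rightarrow> 'k::field" where
  "delta \<mu> = (\<lambda>\<tau>. if \<tau> = \<mu> then 1 else 0)"

lemma ext_sum:
  assumes "finite S" "supp x \<subseteq> S"
  shows "ext c x \<tau> = (\<Sum>\<sigma>\<in>S. x \<sigma> * c \<sigma> \<tau>)"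
  unfolding ext_def
  by (rule sum.mono_neutral_left) (use assms in \<open>auto simp: supp_def\<close>)

lemma supp_ext: "supp (ext c x) \<subseteq> (\<Union>\<sigma>\<in>supp x. supp (c \<sigma>))"
proof
  fix \<tau> assume "\<tau> \<in> supp (ext c x)"
  hence "(\<Sum>\<sigma>\<in>supp x. x \<sigma> * c \<sigma> \<tau>) \<noteq> 0" by (simp add: supp_def ext_def)
  then obtain \<sigma> where "\<sigma> \<in> supp x" "x \<sigma> * c \<sigma> \<tau> \<noteq> 0" by (meson sum.neutral)
  thus "\<tau> \<in> (\<Union>\<sigma>\<in>supp x. supp (c \<sigma>))" by (auto simp: supp_def)
qed

lemma finite_supp_ext:
  assumes "finite (supp x)" "\<And>\<sigma>. \<sigma> \<in> supp x \<Longrightarrow> finite (supp (c \<sigma>))"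
  shows "finite (supp (ext c x))"
  by (rule finite_subset[OF supp_ext]) (use assms in auto)

lemma ext_ext:
  assumes "finite (supp x)" "\<And>\<sigma>. \<sigma> \<in> supp x \<Longrightarrow> finite (supp (b \<sigma>))"
  shows "ext c (ext b x) = ext (\<lambda>\<sigma>. ext c (b \<sigma>)) x"
proof
  fix \<tau>
  define T where "T = (\<Union>\<sigma>\<in>supp x. supp (b \<sigma>))"
  have fT: "finite T" using assms by (auto simp: T_def)
  have "ext c (ext b x) \<tau> = (\<Sum>\<mu>\<in>T. ext b x \<mu> * c \<mu> \<tau>)"
    by (rule ext_sum[OF fT]) (use supp_ext[of b x] in \<open>auto simp: T_def\<close>)
  also have "\<dots> = (\<Sum>\<mu>\<in>T. (\<Sum>\<sigma>\<in>supp x. x \<sigma> * b \<sigma> \<mu>) * c \<mu> \<tau>)"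
    by (simp add: ext_def)
  also have "\<dots> = (\<Sum>\<sigma>\<in>supp x. x \<sigma> * (\<Sum>\<mu>\<in>T. b \<sigma> \<mu> * c \<mu> \<tau>))"
    by (simp add: sum_distrib_left sum_distrib_right sum.swap[of _ T] mult.assoc)
  also have "\<dots> = (\<Sum>\<sigma>\<in>supp x. x \<sigma> * ext c (b \<sigma>) \<tau>)"
    by (intro sum.cong refl arg_cong[where f="\<lambda>u. _ * u"] ext_sum[symmetric] fT)
       (auto simp: T_def)
  finally show "ext c (ext b x) \<tau> = ext (\<lambda>\<sigma>. ext c (b \<sigma>)) x \<tau>" by (simp add: ext_def)
qed

lemma ext_diff_map: "ext (\<lambda>\<sigma> \<tau>. f \<sigma> \<tau> - g \<sigma> \<tau>) x = (\<lambda>\<tau>. ext f x \<tau> - ext g x \<tau>)"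
  by (auto simp: ext_def algebra_simps sum_subtractf)

lemma ext_zero [simp]: "ext c (\<lambda>_. 0) = (\<lambda>_. 0)"
  by (simp add: ext_def supp_def)

lemma ext_cong: "(\<And>\<sigma>. \<sigma> \<in> supp x \<Longrightarrow> c \<sigma> = c' \<sigma>) \<Longrightarrow> ext c x = ext c' x"
  by (auto simp: ext_def intro!: sum.cong)

lemma supp_delta [simp]: "supp (delta \<mu> :: _ \<Rightarrow> 'k::field) = {\<mu>}"
  by (auto simp: supp_def delta_def)

lemma ext_delta_left [simp]: "ext c (delta \<mu>) = c \<mu>"
  unfolding ext_def supp_delta by (simp add: delta_def)

lemma ext_delta_right:
  assumes "finite (supp x)"
  shows "ext delta x = x"
proof
  fix \<tau>
  show "ext delta x \<tau> = x \<tau>"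
  proof (cases "\<tau> \<in> supp x")
    case True
    then show ?thesis using assms
      by (simp add: ext_def delta_def if_distrib cong: if_cong)
  next
    case False
    then show ?thesis
      by (auto simp: ext_def delta_def supp_def intro!: sum.neutral)
  qed
qed

lemma ext_diff_chain:
  assumes "finite (supp x)" "finite (supp y)"
  shows "ext c (\<lambda>\<tau>. x \<tau> - y \<tau>) = (\<lambda>\<tau>. ext c x \<tau> - ext c y \<tau>)"
proof
  fix \<tau>
  let ?S = "supp x \<union> supp y"
  have "ext c (\<lambda>\<tau>. x \<tau> - y \<tau>) \<tau> = (\<Sum>\<sigma>\<in>?S. (x \<sigma> - y \<sigma>) * c \<sigma> \<tau>)"
    by (rule ext_sum) (use assms in \<open>auto simp: supp_def\<close>)
  also have "\<dots> = (\<Sum>\<sigma>\<in>?S. x \<sigma> * c \<sigma> \<tau>) - (\<Sum>\<sigma>\<in>?S. y \<sigma> * c \<sigma> \<tau>)"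
    by (simp add: algebra_simps sum_subtractf)
  also have "\<dots> = ext c x \<tau> - ext c y \<tau>"
    using ext_sum[of ?S x c \<tau>] ext_sum[of ?S y c \<tau>] assms by simp
  finally show "ext c (\<lambda>\<tau>. x \<tau> - y \<tau>) \<tau> = ext c x \<tau> - ext c y \<tau>" .
qed

lemma supp_diff: "supp (\<lambda>\<tau>. x \<tau> - y \<tau>) \<subseteq> supp x \<union> supp (y :: _ \<Rightarrow> 'k::field)"
  by (auto simp: supp_def)

lemma supp_bd: "supp (bd \<sigma> :: _ \<Rightarrow> 'k::field) \<subseteq> (\<lambda>i. \<sigma> - {sorted_list_of_set \<sigma> ! i}) ` {..<card \<sigma>}"
proof
  fix \<tau> assume "\<tau> \<in> supp (bd \<sigma> :: _ \<Rightarrow> 'k)"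
  hence "(\<Sum>i<card \<sigma>. if \<tau> = \<sigma> - {sorted_list_of_set \<sigma> ! i} then (-1::'k) ^ i else 0) \<noteq> 0"
    by (simp add: supp_def bd_def)
  then obtain i where "i < card \<sigma>" "\<tau> = \<sigma> - {sorted_list_of_set \<sigma> ! i}"
    by (rule sum.not_neutral_contains_not_neutral) (auto split: if_splits)
  thus "\<tau> \<in> (\<lambda>i. \<sigma> - {sorted_list_of_set \<sigma> ! i}) ` {..<card \<sigma>}" by auto
qed

lemma finite_supp_bd [simp]: "finite (supp (bd \<sigma> :: _ \<Rightarrow> 'k::field))"
  by (rule finite_subset[OF supp_bd]) auto

lemma supp_bd_subset: "\<nu> \<in> supp (bd \<sigma> :: _ \<Rightarrow> 'k::field) \<Longrightarrow> \<nu> \<subseteq> \<sigma>"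
  using supp_bd by blast

lemma card_supp_bd:
  assumes "\<nu> \<in> supp (bd \<sigma> :: _ \<Rightarrow> 'k::field)"
  shows "card \<nu> + 1 = card \<sigma>"
proof -
  obtain i where i: "i < card \<sigma>" "\<nu> = \<sigma> - {sorted_list_of_set \<sigma> ! i}"
    using supp_bd assms by blast
  hence fin: "finite \<sigma>" by (metis card.infinite less_nat_zero_code)
  have "sorted_list_of_set \<sigma> ! i \<in> \<sigma>" using i fin
    by (metis length_sorted_list_of_set nth_mem set_sorted_list_of_set)
  thus ?thesis using i fin by (auto simp: card_Diff_singleton)
qed

lemma bd_empty: "bd {} = (\<lambda>_. 0)"
  by (simp add: bd_def)

lemma bdc_zero [simp]: "bdc (\<lambda>_. 0) = (\<lambda>_. 0)"
  by (simp add: bdc_def)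

lemma bdc_delta [simp]: "bdc (delta \<mu>) = bd \<mu>"
  by (simp add: bdc_def)

lemma bdc_ext:
  assumes "finite (supp x)" "\<And>\<sigma>. \<sigma> \<in> supp x \<Longrightarrow> finite (supp (c \<sigma>))"
  shows "bdc (ext c x) = ext (\<lambda>\<sigma>. bdc (c \<sigma>)) x"
  unfolding bdc_def by (rule ext_ext[OF assms])

lemma ext_bd:
  "ext c (bd \<sigma>) = (\<lambda>\<tau>. \<Sum>i<card \<sigma>. (-1)^i * c (\<sigma> - {sorted_list_of_set \<sigma> ! i}) \<tau>)"
proof
  fix \<tau>
  let ?S = "(\<lambda>i. \<sigma> - {sorted_list_of_set \<sigma> ! i}) ` {..<card \<sigma>}"
  have "ext c (bd \<sigma>) \<tau> = (\<Sum>\<nu>\<in>?S. bd \<sigma> \<nu> * c \<nu> \<tau>)"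
    by (rule ext_sum[OF _ supp_bd]) simp
  also have "\<dots> = (\<Sum>\<nu>\<in>?S. \<Sum>i<card \<sigma>. (if \<nu> = \<sigma> - {sorted_list_of_set \<sigma> ! i} then (-1)^i else 0) * c \<nu> \<tau>)"
    by (simp add: bd_def sum_distrib_right)
  also have "\<dots> = (\<Sum>i<card \<sigma>. \<Sum>\<nu>\<in>?S. (if \<nu> = \<sigma> - {sorted_list_of_set \<sigma> ! i} then (-1)^i * c \<nu> \<tau> else 0))"
    by (subst sum.swap) (intro sum.cong refl, simp)
  also have "\<dots> = (\<Sum>i<card \<sigma>. (-1)^i * c (\<sigma> - {sorted_list_of_set \<sigma> ! i}) \<tau>)"
    by (intro sum.cong refl) (subst sum.delta, auto)
  finally show "ext c (bd \<sigma>) \<tau> = (\<Sum>i<card \<sigma>. (-1)^i * c (\<sigma> - {sorted_list_of_set \<sigma> ! i}) \<tau>)" .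
qed

lemma sorted_list_of_set_insert_least:
  assumes "finite \<mu>" "\<forall>x\<in>\<mu>. v < x"
  shows "sorted_list_of_set (insert v \<mu>) = v # sorted_list_of_set \<mu>"
proof -
  have "sorted (v # sorted_list_of_set \<mu>)" "distinct (v # sorted_list_of_set \<mu>)"
    using assms by (auto simp: less_imp_le)
  hence "sorted_list_of_set (set (v # sorted_list_of_set \<mu>)) = v # sorted_list_of_set \<mu>"
    by (rule sorted_list_of_set.idem_if_sorted_distinct)
  thus ?thesis using assms by simp
qed

lemma bd_insert_least:
  assumes "finite \<mu>" "\<forall>x\<in>\<mu>. v < x"
  shows "(bd (insert v \<mu>) :: _ \<Rightarrow> 'k::field) =
     (\<lambda>\<tau>. delta \<mu> \<tau> - ext (\<lambda>\<nu>. delta (insert v \<nu>)) (bd \<mu>) \<tau>)"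
proof
  fix \<tau>
  let ?xs = "sorted_list_of_set \<mu>"
  have vn: "v \<notin> \<mu>" using assms by auto
  have c: "card (insert v \<mu>) = Suc (card \<mu>)" using assms vn by simp
  have sl: "sorted_list_of_set (insert v \<mu>) = v # ?xs" by (rule sorted_list_of_set_insert_least[OF assms])
  have mem: "i < card \<mu> \<Longrightarrow> ?xs ! i \<in> \<mu>" for i
    using assms by (metis length_sorted_list_of_set nth_mem set_sorted_list_of_set)
  have eq: "i < card \<mu> \<Longrightarrow> insert v \<mu> - {?xs ! i} = insert v (\<mu> - {?xs ! i})" for i
    using mem[of i] vn by auto
  have "bd (insert v \<mu>) \<tau> = (\<Sum>i<Suc (card \<mu>). if \<tau> = insert v \<mu> - {(v # ?xs) ! i} then (-1::'k) ^ i else 0)"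
    by (simp add: bd_def c sl)
  also have "\<dots> = delta \<mu> \<tau> + (\<Sum>i<card \<mu>. if \<tau> = insert v \<mu> - {?xs ! i} then (-1::'k) ^ Suc i else 0)"
    by (subst sum.lessThan_Suc_shift) (simp add: vn delta_def)
  also have "(\<Sum>i<card \<mu>. if \<tau> = insert v \<mu> - {?xs ! i} then (-1::'k) ^ Suc i else 0)
      = - (\<Sum>i<card \<mu>. (-1) ^ i * delta (insert v (\<mu> - {?xs ! i})) \<tau>)"
    by (simp add: sum_negf[symmetric] delta_def, intro sum.cong refl, simp add: eq)
  finally have "bd (insert v \<mu>) \<tau> = delta \<mu> \<tau> - (\<Sum>i<card \<mu>. (-1) ^ i * delta (insert v (\<mu> - {?xs ! i})) \<tau> :: 'k)"
    by simp
  then show "bd (insert v \<mu>) \<tau> = delta \<mu> \<tau> - (ext (\<lambda>\<nu>. delta (insert v \<nu>)) (bd \<mu>) \<tau> :: 'k)"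
    unfolding ext_bd by simp
qed

lemma bdc_bd: "bdc (bd \<sigma>) = (\<lambda>_. 0 :: 'k::field)"
  unfolding bdc_def
proof (induction "card \<sigma>" arbitrary: \<sigma> rule: less_induct)
  case less
  show ?case
  proof (cases "finite \<sigma> \<and> \<sigma> \<noteq> {}")
    case False
    hence "card \<sigma> = 0" by auto
    hence "bd \<sigma> = (\<lambda>_. 0 :: 'k)" by (simp add: bd_def)
    thus ?thesis by simp
  next
    case True
    define v where "v = Min \<sigma>"
    define \<mu> where "\<mu> = \<sigma> - {v}"
    have vin: "v \<in> \<sigma>" using True by (simp add: v_def)
    have fm: "finite \<mu>" and lt: "\<forall>x\<in>\<mu>. v < x" using True
      by (auto simp: \<mu>_def v_def order.strict_iff_order)
    have s: "\<sigma> = insert v \<mu>" using vin by (auto simp: \<mu>_def)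
    have cm: "card \<mu> < card \<sigma>" using True vin unfolding \<mu>_def by (meson card_Diff1_less)
    let ?K = "\<lambda>\<nu>. delta (insert v \<nu>) :: _ \<Rightarrow> 'k"
    have bds: "bd \<sigma> = (\<lambda>\<tau>. delta \<mu> \<tau> - ext ?K (bd \<mu>) \<tau>)"
      unfolding s by (rule bd_insert_least[OF fm lt])
    have f1: "finite (supp (ext ?K (bd \<mu>)))" by (rule finite_supp_ext) auto
    have "ext bd (bd \<sigma>) = (\<lambda>\<tau>. ext bd (delta \<mu>) \<tau> - ext bd (ext ?K (bd \<mu>)) \<tau>)"
      unfolding bds by (rule ext_diff_chain) (auto simp: f1)
    also have "ext bd (ext ?K (bd \<mu>)) = ext (\<lambda>\<nu>. bd (insert v \<nu>)) (bd \<mu>)"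
      by (subst ext_ext) auto
    also have "\<dots> = ext (\<lambda>\<nu> \<tau>. delta \<nu> \<tau> - ext ?K (bd \<nu>) \<tau>) (bd \<mu>)"
    proof (rule ext_cong)
      fix \<nu> assume "\<nu> \<in> supp (bd \<mu> :: _ \<Rightarrow> 'k)"
      hence "\<nu> \<subseteq> \<mu>" by (rule supp_bd_subset)
      hence "finite \<nu>" "\<forall>x\<in>\<nu>. v < x" using fm lt by (auto intro: finite_subset)
      thus "bd (insert v \<nu>) = (\<lambda>\<tau>. delta \<nu> \<tau> - ext ?K (bd \<nu>) \<tau>)" by (rule bd_insert_least)
    qed
    also have "\<dots> = (\<lambda>\<tau>. ext delta (bd \<mu>) \<tau> - ext (\<lambda>\<nu>. ext ?K (bd \<nu>)) (bd \<mu>) \<tau>)"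
      by (rule ext_diff_map)
    also have "ext (\<lambda>\<nu>. ext ?K (bd \<nu>)) (bd \<mu>) = ext ?K (ext bd (bd \<mu>))"
      by (subst ext_ext) auto
    also have "ext bd (bd \<mu>) = (\<lambda>_. 0 :: 'k)" using less cm by blast
    also have "ext delta (bd \<mu>) = (bd \<mu> :: _ \<Rightarrow> 'k)" by (rule ext_delta_right) simp
    finally show ?thesis by simp
  qed
qed

definition cone :: "'v \<Rightarrow> 'v set \<Rightarrow> 'v set \<Rightarrow> 'k::field" where
  "cone v \<nu> = (if v \<in> \<nu> then (\<lambda>_. 0) else delta (insert v \<nu>))"

lemma supp_cone: "supp (cone v \<mu> :: _ \<Rightarrow> 'k::field) \<subseteq> (if v \<in> \<mu> then {} else {insert v \<mu>})"
  by (auto simp: cone_def supp_def delta_def)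

lemma finite_supp_cone [simp]: "finite (supp (cone v \<mu> :: _ \<Rightarrow> 'k::field))"
  by (rule finite_subset[OF supp_cone]) simp

lemma bdc_cone:
  assumes "finite \<nu>" "\<forall>x\<in>\<nu>. v \<le> x"
  shows "bdc (cone v \<nu>) = (\<lambda>\<tau>. delta \<nu> \<tau> - ext (cone v) (bd \<nu>) \<tau> :: 'k::field)"
proof (cases "v \<in> \<nu>")
  case False
  hence lt: "\<forall>x\<in>\<nu>. v < x" using assms by (metis order.order_iff_strict)
  have "ext (cone v) (bd \<nu>) = ext (\<lambda>\<nu>'. delta (insert v \<nu>')) (bd \<nu> :: _ \<Rightarrow> 'k)"
    by (rule ext_cong) (use False supp_bd_subset in \<open>fastforce simp: cone_def\<close>)
  then show ?thesis using False bd_insert_least[OF assms(1) lt, where 'k='k]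
    by (simp add: cone_def)
next
  case True
  define \<mu> where "\<mu> = \<nu> - {v}"
  have fm: "finite \<mu>" and lt: "\<forall>x\<in>\<mu>. v < x" using assms by (auto simp: \<mu>_def)
  have nu: "\<nu> = insert v \<mu>" using True by (auto simp: \<mu>_def)
  have vn: "v \<notin> \<mu>" by (simp add: \<mu>_def)
  let ?xs = "sorted_list_of_set \<mu>"
  have sl: "sorted_list_of_set \<nu> = v # ?xs" unfolding nu by (rule sorted_list_of_set_insert_least[OF fm lt])
  have c: "card \<nu> = Suc (card \<mu>)" using fm vn nu by simp
  have mem: "i < card \<mu> \<Longrightarrow> ?xs ! i \<in> \<mu>" for i
    using fm by (metis length_sorted_list_of_set nth_mem set_sorted_list_of_set)
  have z: "i < card \<mu> \<Longrightarrow> cone v (insert v \<mu> - {?xs ! i}) = (\<lambda>_. 0 :: 'k)" for i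
    using mem[of i] vn by (auto simp: cone_def nu)
  have "ext (cone v) (bd \<nu>) = (\<lambda>\<tau>. \<Sum>i<Suc (card \<mu>). (-1)^i * cone v (\<nu> - {(v # ?xs) ! i}) \<tau> :: 'k)"
    by (simp add: ext_bd c sl)
  also have "\<dots> = cone v \<mu>"
    by (subst sum.lessThan_Suc_shift) (simp add: z nu vn)
  also have "\<dots> = delta \<nu>" using vn by (simp add: cone_def nu)
  finally show ?thesis using True by (simp add: cone_def)
qed

lemma bdc_ext_cone_cycle:
  assumes fin: "finite (supp y)" and cycle: "bdc y = (\<lambda>_. 0)"
    and above: "\<And>\<mu>. \<mu> \<in> supp y \<Longrightarrow> finite \<mu> \<and> (\<forall>x\<in>\<mu>. v \<le> x)"
  shows "bdc (ext (cone v) y) = (y :: _ \<Rightarrow> 'k::field)"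
proof -
  have "bdc (ext (cone v) y) = ext (\<lambda>\<mu>. bdc (cone v \<mu>)) y"
    by (rule bdc_ext[OF fin]) simp
  also have "\<dots> = ext (\<lambda>\<mu> \<tau>. delta \<mu> \<tau> - ext (cone v) (bd \<mu>) \<tau>) y"
    by (rule ext_cong) (use above bdc_cone in blast)
  also have "\<dots> = (\<lambda>\<tau>. ext delta y \<tau> - ext (\<lambda>\<mu>. ext (cone v) (bd \<mu>)) y \<tau>)"
    by (rule ext_diff_map)
  also have "ext (\<lambda>\<mu>. ext (cone v) (bd \<mu>)) y = ext (cone v) (bdc y)"
    unfolding bdc_def by (rule ext_ext[symmetric, OF fin]) simp
  also have "ext delta y = y" by (rule ext_delta_right[OF fin])
  finally show ?thesis by (simp add: cycle)
qed

lemma supp_ext_cone: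
  assumes "\<mu> \<in> supp (ext (cone v) y :: _ \<Rightarrow> 'k::field)"
  shows "\<exists>\<mu>'\<in>supp y. v \<notin> \<mu>' \<and> \<mu> = insert v \<mu>'"
proof -
  obtain \<mu>' where "\<mu>' \<in> supp y" "\<mu> \<in> supp (cone v \<mu>' :: _ \<Rightarrow> 'k)"
    using assms supp_ext[of "cone v" y] by blast
  thus ?thesis using supp_cone[of v \<mu>'] by (cases "v \<in> \<mu>'") auto
qed

lemma bdc_eq_0_outside:
  assumes "\<And>\<nu>. \<nu> \<in> supp x \<Longrightarrow> \<nu> \<subseteq> S" "\<not> \<mu> \<subseteq> S"
  shows "bdc x \<mu> = (0 :: 'k::field)"
  unfolding bdc_def ext_def
proof (rule sum.neutral, rule ballI)
  fix \<nu> assume "\<nu> \<in> supp x"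
  then have "\<mu> \<notin> supp (bd \<nu> :: _ \<Rightarrow> 'k)" using assms supp_bd_subset[of \<mu> \<nu>] by blast
  then show "x \<nu> * bd \<nu> \<mu> = 0" by (simp add: supp_def)
qed

lemma ext_bd_single_facet:
  assumes "finite \<rho>" "v \<in> \<rho>" "\<And>w. w \<in> \<rho> \<Longrightarrow> w \<noteq> v \<Longrightarrow> c (\<rho> - {w}) \<mu> = 0"
  shows "\<exists>i. ext c (bd \<rho>) \<mu> = (-1)^i * c (\<rho> - {v}) \<mu>"
proof -
  let ?xs = "sorted_list_of_set \<rho>"
  have "v \<in> set ?xs" using assms(1,2) by simp
  then obtain i0 where i0: "i0 < card \<rho>" "?xs ! i0 = v" by (metis in_set_conv_nth length_sorted_list_of_set)
  have "(-1)^i * c (\<rho> - {?xs ! i}) \<mu> = 0" if "i \<in> {..<card \<rho>} - {i0}" for i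
  proof -
    have "?xs ! i \<noteq> v" using that i0 nth_eq_iff_index_eq[of ?xs i i0] by auto
    moreover have "?xs ! i \<in> \<rho>" using that assms(1) by (metis DiffD1 lessThan_iff length_sorted_list_of_set nth_mem set_sorted_list_of_set)
    ultimately show ?thesis using assms(3) by simp
  qed
  then have "(\<Sum>i\<in>{..<card \<rho>} - {i0}. (-1)^i * c (\<rho> - {?xs ! i}) \<mu>) = 0"
    by (rule sum.neutral[OF ballI])
  moreover have "ext c (bd \<rho>) \<mu> = (-1)^i0 * c (\<rho> - {?xs ! i0}) \<mu>
      + (\<Sum>i\<in>{..<card \<rho>} - {i0}. (-1)^i * c (\<rho> - {?xs ! i}) \<mu>)"
    unfolding ext_bd using i0 by (intro sum.remove) auto
  ultimately show ?thesis using i0 by auto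
qed

section \<open>Acyclic carriers\<close>

definition simplicial_complex :: "'v set set \<Rightarrow> bool" where
  "simplicial_complex K \<longleftrightarrow> {} \<notin> K \<and> (\<forall>\<sigma>\<in>K. finite \<sigma> \<and> (\<forall>\<nu>. \<nu> \<subseteq> \<sigma> \<longrightarrow> \<nu> \<noteq> {} \<longrightarrow> \<nu> \<in> K))"

lemma simplicial_complex_Rinf: "finite P \<Longrightarrow> simplicial_complex (Rinf P \<alpha>)"
  unfolding simplicial_complex_def Rinf_def by (auto intro: finite_subset)

lemma supp_bd_in_complex:
  assumes "simplicial_complex K" "\<sigma> \<in> insert {} K" "\<nu> \<in> supp (bd \<sigma> :: _ \<Rightarrow> 'k::field)"
  shows "\<nu> \<in> insert {} K"
  using assms supp_bd_subset[OF assms(3)] unfolding simplicial_complex_def by blast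

lemma aug_chain_mapD:
  assumes "aug_chain_map K L c" "\<sigma> \<in> insert {} K"
  shows "is_chain L (c \<sigma>)" "finite (supp (c \<sigma>))" "homog (card \<sigma>) (c \<sigma>)"
    and "bdc (c \<sigma>) = ext c (bd \<sigma>)"
  using assms by (auto simp: aug_chain_map_def is_chain_def)

lemma aug_chain_map_empty: "aug_chain_map K L c \<Longrightarrow> c {} = delta {}"
  by (simp add: aug_chain_map_def delta_def)

lemma supp_aug_chain_map:
  "aug_chain_map K L c \<Longrightarrow> \<sigma> \<in> insert {} K \<Longrightarrow> \<tau> \<in> supp (c \<sigma>) \<Longrightarrow> \<tau> \<in> insert {} L"
  by (auto simp: aug_chain_map_def is_chain_def)

lemma aug_chain_map_comp:
  assumes K: "simplicial_complex K"
    and c1: "aug_chain_map K X c1" and c2: "aug_chain_map X L c2"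
  shows "aug_chain_map K L (\<lambda>\<sigma>. ext c2 (c1 \<sigma>))"
  unfolding aug_chain_map_def
proof (intro conjI ballI)
  fix \<sigma> assume \<sigma>: "\<sigma> \<in> insert {} K"
  have X: "\<tau> \<in> insert {} X" if "\<tau> \<in> supp (c1 \<sigma>)" for \<tau>
    by (rule supp_aug_chain_map[OF c1 \<sigma> that])
  show "is_chain L (ext c2 (c1 \<sigma>))"
    unfolding is_chain_def
  proof
    show "finite (supp (ext c2 (c1 \<sigma>)))"
      using aug_chain_mapD(2)[OF c1 \<sigma>] aug_chain_mapD(2)[OF c2 X] by (rule finite_supp_ext)
    show "supp (ext c2 (c1 \<sigma>)) \<subseteq> insert {} L"
      using supp_ext[of c2 "c1 \<sigma>"] supp_aug_chain_map[OF c2 X] by blast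
  qed
  show "homog (card \<sigma>) (ext c2 (c1 \<sigma>))"
    unfolding homog_def
  proof
    fix \<mu> assume "\<mu> \<in> supp (ext c2 (c1 \<sigma>))"
    then obtain \<tau> where \<tau>: "\<tau> \<in> supp (c1 \<sigma>)" "\<mu> \<in> supp (c2 \<tau>)"
      using supp_ext[of c2 "c1 \<sigma>"] by blast
    have "card \<tau> = card \<sigma>" using aug_chain_mapD(3)[OF c1 \<sigma>] \<tau>(1) by (simp add: homog_def)
    thus "card \<mu> = card \<sigma>" using aug_chain_mapD(3)[OF c2 X[OF \<tau>(1)]] \<tau>(2) by (simp add: homog_def)
  qed
  have "bdc (ext c2 (c1 \<sigma>)) = ext (\<lambda>\<tau>. bdc (c2 \<tau>)) (c1 \<sigma>)"
    using aug_chain_mapD(2)[OF c1 \<sigma>] aug_chain_mapD(2)[OF c2 X] by (rule bdc_ext)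
  also have "\<dots> = ext (\<lambda>\<tau>. ext c2 (bd \<tau>)) (c1 \<sigma>)"
    by (rule ext_cong) (use aug_chain_mapD(4)[OF c2 X] in blast)
  also have "\<dots> = ext c2 (bdc (c1 \<sigma>))"
    unfolding bdc_def by (rule ext_ext[symmetric]) (simp_all add: aug_chain_mapD(2)[OF c1 \<sigma>])
  also have "\<dots> = ext c2 (ext c1 (bd \<sigma>))" by (simp add: aug_chain_mapD(4)[OF c1 \<sigma>])
  also have "\<dots> = ext (\<lambda>\<nu>. ext c2 (c1 \<nu>)) (bd \<sigma>)"
    by (rule ext_ext) (simp_all add: aug_chain_mapD(2)[OF c1 supp_bd_in_complex[OF K \<sigma>]])
  finally show "bdc (ext c2 (c1 \<sigma>)) = ext (\<lambda>\<sigma>. ext c2 (c1 \<sigma>)) (bd \<sigma>)" .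
next
  show "ext c2 (c1 {}) = (\<lambda>\<tau>. if \<tau> = {} then 1 else 0)"
    by (simp add: aug_chain_map_empty[OF c1] aug_chain_map_empty[OF c2]) (simp add: delta_def)
qed

locale acyclic_carrier =
  fixes K L :: "'v::linorder set set" and \<phi> :: "'v set \<Rightarrow> 'v set \<Rightarrow> 'k::field"
    and W :: "'v set \<Rightarrow> 'v set"
  assumes complex: "simplicial_complex K"
    and chain_map: "aug_chain_map K L \<phi>"
    and subset_carrier: "\<sigma> \<in> K \<Longrightarrow> \<sigma> \<subseteq> W \<sigma>"
    and carrier_mono: "\<sigma> \<in> K \<Longrightarrow> \<nu> \<in> K \<Longrightarrow> \<nu> \<subseteq> \<sigma> \<Longrightarrow> W \<nu> \<subseteq> W \<sigma>"
    and finite_carrier: "\<sigma> \<in> K \<Longrightarrow> finite (W \<sigma>)"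
    and supp_in_carrier: "\<sigma> \<in> K \<Longrightarrow> \<mu> \<in> supp (\<phi> \<sigma>) \<Longrightarrow> \<mu> \<subseteq> W \<sigma>"
    and carrier_simplex: "\<sigma> \<in> K \<Longrightarrow> T \<noteq> {} \<Longrightarrow> T \<subseteq> W \<sigma> \<Longrightarrow> T \<in> L"
begin

definition homotopy_defect :: "('v set \<Rightarrow> 'v set \<Rightarrow> 'k) \<Rightarrow> 'v set \<Rightarrow> 'v set \<Rightarrow> 'k" where
  "homotopy_defect D \<sigma> = (\<lambda>\<tau>. delta \<sigma> \<tau> - \<phi> \<sigma> \<tau> - ext D (bd \<sigma>) \<tau>)"

text \<open>The last conjunct is the chain homotopy equation \<open>\<partial>D + D\<partial> = id - \<phi>\<close> on \<sigma>.\<close>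
definition partial_homotopy :: "nat \<Rightarrow> ('v set \<Rightarrow> 'v set \<Rightarrow> 'k) \<Rightarrow> bool" where
  "partial_homotopy N D \<longleftrightarrow> D {} = (\<lambda>_. 0) \<and>
     (\<forall>\<sigma>\<in>K. card \<sigma> < N \<longrightarrow> is_chain L (D \<sigma>) \<and> homog (Suc (card \<sigma>)) (D \<sigma>) \<and>
        (\<forall>\<mu>\<in>supp (D \<sigma>). \<mu> \<subseteq> W \<sigma>) \<and> bdc (D \<sigma>) = homotopy_defect D \<sigma>)"

lemma partial_homotopy_0: "partial_homotopy 0 (\<lambda>_ _. 0)"
  by (simp add: partial_homotopy_def)

lemma partial_homotopyD:
  assumes D: "partial_homotopy N D" and \<sigma>: "\<sigma> \<in> insert {} K" "card \<sigma> < N"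
  shows "is_chain L (D \<sigma>)" "finite (supp (D \<sigma>))" "homog (Suc (card \<sigma>)) (D \<sigma>)"
    and "bdc (D \<sigma>) = homotopy_defect D \<sigma>"
proof -
  have "is_chain L (D \<sigma>) \<and> homog (Suc (card \<sigma>)) (D \<sigma>) \<and> bdc (D \<sigma>) = homotopy_defect D \<sigma>"
  proof (cases "\<sigma> = {}")
    case True
    have "homotopy_defect D {} = (\<lambda>_. 0)"
      by (simp add: homotopy_defect_def aug_chain_map_empty[OF chain_map] bd_empty)
    then show ?thesis using D True by (simp add: partial_homotopy_def is_chain_def homog_def supp_def)
  next
    case False
    then show ?thesis using D \<sigma> by (simp add: partial_homotopy_def)
  qed
  then show "is_chain L (D \<sigma>)" "finite (supp (D \<sigma>))" "homog (Suc (card \<sigma>)) (D \<sigma>)"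
    "bdc (D \<sigma>) = homotopy_defect D \<sigma>"
    by (simp_all add: is_chain_def)
qed

lemma supp_homotopy_defect_subset:
  "supp (homotopy_defect D \<sigma>) \<subseteq> {\<sigma>} \<union> supp (\<phi> \<sigma>) \<union> supp (ext D (bd \<sigma>))"
  unfolding homotopy_defect_def
  using supp_diff[of "\<lambda>\<tau>. delta \<sigma> \<tau> - \<phi> \<sigma> \<tau>" "ext D (bd \<sigma>)"] supp_diff[of "delta \<sigma>" "\<phi> \<sigma>"]
  by auto

lemma finite_supp_homotopy_defect:
  assumes D: "partial_homotopy N D" and \<sigma>: "\<sigma> \<in> K" "card \<sigma> = N"
  shows "finite (supp (homotopy_defect D \<sigma>))" "finite (supp (ext D (bd \<sigma>)))"
proof -
  show fin_ext: "finite (supp (ext D (bd \<sigma>)))"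
  proof (rule finite_supp_ext[OF finite_supp_bd])
    fix \<nu> assume \<nu>: "\<nu> \<in> supp (bd \<sigma> :: _ \<Rightarrow> 'k)"
    show "finite (supp (D \<nu>))"
      by (rule partial_homotopyD(2)[OF D supp_bd_in_complex[OF complex _ \<nu>]])
        (use \<sigma> card_supp_bd[OF \<nu>] in auto)
  qed
  have "finite (supp (\<phi> \<sigma>))" using \<sigma> aug_chain_mapD(2)[OF chain_map] by simp
  then show "finite (supp (homotopy_defect D \<sigma>))"
    using fin_ext by (intro finite_subset[OF supp_homotopy_defect_subset]) simp
qed

lemma homotopy_defect_cycle:
  assumes D: "partial_homotopy N D" and \<sigma>: "\<sigma> \<in> K" "card \<sigma> = N"
  shows "bdc (homotopy_defect D \<sigma>) = (\<lambda>_. 0)"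
proof -
  have faces: "\<nu> \<in> insert {} K" "card \<nu> < N" if "\<nu> \<in> supp (bd \<sigma> :: _ \<Rightarrow> 'k)" for \<nu>
    using supp_bd_in_complex[OF complex _ that] card_supp_bd[OF that] \<sigma> by auto
  have "bdc (ext D (bd \<sigma>)) = ext (\<lambda>\<nu>. bdc (D \<nu>)) (bd \<sigma>)"
    by (rule bdc_ext[OF finite_supp_bd]) (use partial_homotopyD(2)[OF D] faces in blast)
  also have "\<dots> = ext (homotopy_defect D) (bd \<sigma>)"
    by (rule ext_cong) (use partial_homotopyD(4)[OF D] faces in blast)
  also have "\<dots> = (\<lambda>\<tau>. ext delta (bd \<sigma>) \<tau> - ext \<phi> (bd \<sigma>) \<tau> - ext D (bdc (bd \<sigma>)) \<tau>)"
    unfolding homotopy_defect_def ext_diff_map bdc_def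
    by (subst ext_ext[of "bd \<sigma>"]) simp_all
  also have "\<dots> = (\<lambda>\<tau>. bd \<sigma> \<tau> - bdc (\<phi> \<sigma>) \<tau>)"
    using \<sigma> by (simp add: bdc_bd ext_delta_right aug_chain_mapD(4)[OF chain_map])
  finally have bdE: "bdc (ext D (bd \<sigma>)) = (\<lambda>\<tau>. bd \<sigma> \<tau> - bdc (\<phi> \<sigma>) \<tau>)" .
  have fin_\<phi>: "finite (supp (\<phi> \<sigma>))" using \<sigma> aug_chain_mapD(2)[OF chain_map] by simp
  have fin_diff: "finite (supp (\<lambda>\<tau>. delta \<sigma> \<tau> - \<phi> \<sigma> \<tau>))"
    using fin_\<phi> by (intro finite_subset[OF supp_diff]) simp
  have "bdc (homotopy_defect D \<sigma>) =
      (\<lambda>\<tau>. bdc (delta \<sigma>) \<tau> - bdc (\<phi> \<sigma>) \<tau> - bdc (ext D (bd \<sigma>)) \<tau>)"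
    unfolding homotopy_defect_def bdc_def
    by (simp add: ext_diff_chain[OF fin_diff finite_supp_homotopy_defect(2)[OF D \<sigma>]]
        ext_diff_chain[OF _ fin_\<phi>])
  then show ?thesis by (simp add: bdE)
qed

lemma supp_homotopy_defect:
  assumes D: "partial_homotopy N D" and \<sigma>: "\<sigma> \<in> K" "card \<sigma> = N"
    and \<mu>: "\<mu> \<in> supp (homotopy_defect D \<sigma>)"
  shows "\<mu> \<subseteq> W \<sigma>" "card \<mu> = N"
proof -
  have "\<mu> = \<sigma> \<or> \<mu> \<in> supp (\<phi> \<sigma>) \<or> \<mu> \<in> supp (ext D (bd \<sigma>))"
    using \<mu> supp_homotopy_defect_subset by blast
  moreover have "\<mu> \<subseteq> W \<sigma> \<and> card \<mu> = N" if "\<mu> = \<sigma>"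
    using that subset_carrier[OF \<sigma>(1)] \<sigma>(2) by simp
  moreover have "\<mu> \<subseteq> W \<sigma> \<and> card \<mu> = N" if "\<mu> \<in> supp (\<phi> \<sigma>)"
    using that supp_in_carrier[OF \<sigma>(1)] aug_chain_mapD(3)[OF chain_map] \<sigma> by (auto simp: homog_def)
  moreover have "\<mu> \<subseteq> W \<sigma> \<and> card \<mu> = N" if \<mu>_ext: "\<mu> \<in> supp (ext D (bd \<sigma>))"
  proof -
    obtain \<nu> where \<nu>: "\<nu> \<in> supp (bd \<sigma> :: _ \<Rightarrow> 'k)" "\<mu> \<in> supp (D \<nu>)"
      using \<mu>_ext supp_ext[of D "bd \<sigma>"] by blast
    have card_\<nu>: "card \<nu> + 1 = N" using card_supp_bd[OF \<nu>(1)] \<sigma>(2) by simp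
    have "\<nu> \<noteq> {}" using \<nu>(2) D by (auto simp: partial_homotopy_def supp_def)
    then have "\<nu> \<in> K" using supp_bd_in_complex[OF complex _ \<nu>(1)] \<sigma>(1) by simp
    then have "\<mu> \<subseteq> W \<nu>" "homog (Suc (card \<nu>)) (D \<nu>)"
      using D \<nu>(2) card_\<nu> by (auto simp: partial_homotopy_def)
    then show ?thesis
      using carrier_mono[OF \<sigma>(1) \<open>\<nu> \<in> K\<close> supp_bd_subset[OF \<nu>(1)]] \<nu>(2) card_\<nu>
      by (auto simp: homog_def)
  qed
  ultimately show "\<mu> \<subseteq> W \<sigma>" "card \<mu> = N" by blast+
qed

text \<open>The homotopy defect of \<sigma> is a cycle in the full simplex on the finite set W \<sigma>, so it bounds its
  cone from the least vertex of W \<sigma>.\<close>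
lemma cone_homotopy_defect:
  assumes D: "partial_homotopy N D" and \<sigma>: "\<sigma> \<in> K" "card \<sigma> = N"
  defines "C \<equiv> ext (cone (Min (W \<sigma>))) (homotopy_defect D \<sigma>)"
  shows "is_chain L C" "homog (Suc N) C" "\<forall>\<mu>\<in>supp C. \<mu> \<subseteq> W \<sigma>" "bdc C = homotopy_defect D \<sigma>"
proof -
  define v where "v = Min (W \<sigma>)"
  define y where "y = homotopy_defect D \<sigma>"
  have "W \<sigma> \<noteq> {}" using subset_carrier[OF \<sigma>(1)] complex \<sigma>(1) by (auto simp: simplicial_complex_def)
  then have v: "v \<in> W \<sigma>" using finite_carrier[OF \<sigma>(1)] by (simp add: v_def)
  have y: "\<mu> \<subseteq> W \<sigma>" "card \<mu> = N" "finite \<mu>" if "\<mu> \<in> supp y" for \<mu>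
    using supp_homotopy_defect[OF D \<sigma>] that finite_carrier[OF \<sigma>(1)]
    unfolding y_def by (auto intro: finite_subset)
  have C: "C = ext (cone v) y" by (simp add: C_def v_def y_def)
  have supp_C: "\<mu> \<subseteq> W \<sigma> \<and> card \<mu> = Suc N" if "\<mu> \<in> supp C" for \<mu>
    using supp_ext_cone[OF that[unfolded C]] y v by auto
  then show "\<forall>\<mu>\<in>supp C. \<mu> \<subseteq> W \<sigma>" "homog (Suc N) C" by (auto simp: homog_def)
  have fin_y: "finite (supp y)" using finite_supp_homotopy_defect(1)[OF D \<sigma>] by (simp add: y_def)
  have "\<mu> \<in> L" if "\<mu> \<in> supp C" for \<mu>
  proof -
    have "\<mu> \<noteq> {}" using supp_C[OF that] by auto
    then show ?thesis using carrier_simplex[OF \<sigma>(1)] supp_C[OF that] by blast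
  qed
  moreover have "finite (supp C)" unfolding C by (rule finite_supp_ext[OF fin_y]) simp
  ultimately show "is_chain L C" by (auto simp: is_chain_def)
  show "bdc C = homotopy_defect D \<sigma>"
    unfolding C y_def[symmetric]
  proof (rule bdc_ext_cone_cycle[OF fin_y])
    show "bdc y = (\<lambda>_. 0)" using homotopy_defect_cycle[OF D \<sigma>] by (simp add: y_def)
    show "finite \<mu> \<and> (\<forall>x\<in>\<mu>. v \<le> x)" if "\<mu> \<in> supp y" for \<mu>
      using y[OF that] finite_carrier[OF \<sigma>(1)] by (auto simp: v_def)
  qed
qed

lemma partial_homotopy_Suc:
  assumes D: "partial_homotopy N D"
  defines "D' \<equiv> \<lambda>\<sigma>. if \<sigma> \<in> K \<and> card \<sigma> = N then ext (cone (Min (W \<sigma>))) (homotopy_defect D \<sigma>) else D \<sigma>"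
  shows "partial_homotopy (Suc N) D'"
  unfolding partial_homotopy_def
proof (rule conjI[OF _ ballI[OF impI]])
  show "D' {} = (\<lambda>_. 0)" using D complex by (simp add: D'_def partial_homotopy_def simplicial_complex_def)
next
  fix \<sigma> assume \<sigma>: "\<sigma> \<in> K" "card \<sigma> < Suc N"
  have "ext D' (bd \<sigma>) = ext D (bd \<sigma>)"
  proof (rule ext_cong)
    fix \<nu> assume "\<nu> \<in> supp (bd \<sigma> :: _ \<Rightarrow> 'k)"
    then have "card \<nu> \<noteq> N" using card_supp_bd \<sigma>(2) by fastforce
    then show "D' \<nu> = D \<nu>" by (simp add: D'_def)
  qed
  then have defect: "homotopy_defect D' \<sigma> = homotopy_defect D \<sigma>"
    by (simp add: homotopy_defect_def)
  show "is_chain L (D' \<sigma>) \<and> homog (Suc (card \<sigma>)) (D' \<sigma>) \<and> (\<forall>\<mu>\<in>supp (D' \<sigma>). \<mu> \<subseteq> W \<sigma>) \<and>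
      bdc (D' \<sigma>) = homotopy_defect D' \<sigma>"
  proof (cases "card \<sigma> < N")
    case True
    then show ?thesis using D \<sigma>(1) defect by (simp add: D'_def partial_homotopy_def)
  next
    case False
    then have "card \<sigma> = N" using \<sigma>(2) by simp
    then show ?thesis using cone_homotopy_defect[OF D \<sigma>(1)] \<sigma>(1) defect by (simp add: D'_def)
  qed
qed

lemma ex_partial_homotopy: "\<exists>D. partial_homotopy N D"
proof (induction N)
  case 0
  show ?case using partial_homotopy_0 by blast
next
  case (Suc N)
  then obtain D where "partial_homotopy N D" ..
  from partial_homotopy_Suc[OF this] show ?case by blast
qed

theorem cycle_homologous_to_image:
  assumes z: "is_chain K z" "homog n z" "bdc z = (\<lambda>_. 0)"
  shows "\<exists>w. is_chain L w \<and> homog (Suc n) w \<and> bdc w = (\<lambda>\<tau>. z \<tau> - ext \<phi> z \<tau>)"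
proof -
  obtain D where D: "partial_homotopy (Suc n) D" using ex_partial_homotopy by blast
  have fin_z: "finite (supp z)" using z(1) by (simp add: is_chain_def)
  have \<sigma>: "\<sigma> \<in> insert {} K" "card \<sigma> < Suc n" if "\<sigma> \<in> supp z" for \<sigma>
    using z(1,2) that by (auto simp: is_chain_def homog_def)
  note D\<sigma> = partial_homotopyD[OF D \<sigma>]
  have "bdc (ext D z) = ext (\<lambda>\<sigma>. bdc (D \<sigma>)) z"
    using fin_z D\<sigma>(2) by (rule bdc_ext)
  also have "\<dots> = ext (homotopy_defect D) z"
    using D\<sigma>(4) by (rule ext_cong)
  also have "\<dots> = (\<lambda>\<tau>. ext delta z \<tau> - ext \<phi> z \<tau> - ext D (bdc z) \<tau>)"
    unfolding homotopy_defect_def ext_diff_map bdc_def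
    by (subst ext_ext[OF fin_z]) simp_all
  finally have "bdc (ext D z) = (\<lambda>\<tau>. z \<tau> - ext \<phi> z \<tau>)"
    by (simp add: z(3) ext_delta_right[OF fin_z])
  moreover have "is_chain L (ext D z)"
    unfolding is_chain_def
  proof
    show "finite (supp (ext D z))"
      using fin_z D\<sigma>(2) by (rule finite_supp_ext)
    show "supp (ext D z) \<subseteq> insert {} L"
    proof
      fix \<mu> assume "\<mu> \<in> supp (ext D z)"
      then obtain \<sigma> where "\<sigma> \<in> supp z" "\<mu> \<in> supp (D \<sigma>)" using supp_ext[of D z] by blast
      then show "\<mu> \<in> insert {} L" using D\<sigma>(1) by (auto simp: is_chain_def)
    qed
  qed
  moreover have "homog (Suc n) (ext D z)"
    unfolding homog_def
  proof
    fix \<mu> assume "\<mu> \<in> supp (ext D z)"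
    then obtain \<sigma> where "\<sigma> \<in> supp z" "\<mu> \<in> supp (D \<sigma>)" using supp_ext[of D z] by blast
    then show "card \<mu> = Suc n" using D\<sigma>(3) z(2) by (auto simp: homog_def)
  qed
  ultimately show ?thesis by blast
qed

end

section \<open>Grids and Voronoi vertices\<close>

lemma scale_pos: "scale t > 0"
  by (simp add: scale_def)

lemma scale_succ: "scale (t + 1) = 2 * scale t"
  by (simp add: scale_def powr_add)

lemma scale_zero: "scale 0 = 1"
  by (simp add: scale_def)

locale doubling_grid =
  fixes d :: nat and G :: "int \<Rightarrow> point set"
    and T :: "int \<Rightarrow> point \<Rightarrow> point" and b :: "int \<Rightarrow> nat \<Rightarrow> real"
  assumes G_0: "G 0 = {x. length x = d \<and> (\<forall>j<d. x ! j \<in> \<int>)}"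
    and G_succ: "G (t + 1) = T t ` G t"
    and length_T: "length (T t x) = d"
    and nth_T: "j < d \<Longrightarrow> T t x ! j = 2 * x ! j + b t j"
begin

lemma length_grid: "x \<in> G t \<Longrightarrow> length x = d"
  using G_succ[of "t - 1"] length_T by auto

lemma T_inj:
  assumes "T t x = T t y" "length x = d" "length y = d"
  shows "x = y"
proof (rule nth_equalityI)
  show "length x = length y" using assms by simp
  fix j assume "j < length x"
  then have "T t x ! j = T t y ! j" "j < d" using assms by auto
  then show "x ! j = y ! j" using nth_T by simp
qed

lemma grid_coord_diff:
  assumes "x \<in> G t" "y \<in> G t" "j < d"
  shows "\<exists>k::int. x ! j - y ! j = of_int k * scale t"
  using assms(1,2)
proof (induction t arbitrary: x y rule: int_induct[where k=0])
  case base
  then have "x ! j \<in> \<int>" "y ! j \<in> \<int>" using assms(3) by (auto simp: G_0)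
  then obtain a c where "x ! j = of_int a" "y ! j = of_int c" by (auto elim!: Ints_cases)
  then show ?case by (intro exI[of _ "a - c"]) (simp add: scale_zero)
next
  case (step1 i)
  then obtain x0 y0 where x0y0: "x0 \<in> G i" "y0 \<in> G i" "x = T i x0" "y = T i y0"
    by (auto simp: G_succ)
  moreover obtain k where "x0 ! j - y0 ! j = of_int k * scale i"
    using step1.IH x0y0(1,2) by blast
  ultimately show ?case
    using assms(3) scale_succ[of i] by (intro exI[of _ k]) (simp add: nth_T algebra_simps)
next
  case (step2 i)
  have "T (i - 1) x \<in> G i" "T (i - 1) y \<in> G i" using step2.prems G_succ[of "i - 1"] by auto
  then obtain k where "T (i - 1) x ! j - T (i - 1) y ! j = of_int k * scale i"
    using step2.IH by blast
  moreover have "scale i = 2 * scale (i - 1)" using scale_succ[of "i - 1"] by simp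
  ultimately show ?case using assms(3) by (intro exI[of _ k]) (simp add: nth_T algebra_simps)
qed

lemma grid_shift:
  assumes "x \<in> G t" "j < d"
  shows "x[j := x ! j + scale t] \<in> G t"
  using assms(1)
proof (induction t arbitrary: x rule: int_induct[where k=0])
  case base
  then show ?case using assms(2) by (auto simp: G_0 scale_zero nth_list_update)
next
  case (step1 i)
  then obtain x0 where x0: "x0 \<in> G i" "x = T i x0" by (auto simp: G_succ)
  have "T i (x0[j := x0 ! j + scale i]) = x[j := x ! j + scale (i + 1)]"
    by (rule nth_equalityI)
      (use x0 assms(2) length_grid[OF x0(1)] in \<open>auto simp: length_T nth_T nth_list_update scale_succ\<close>)
  moreover have "x0[j := x0 ! j + scale i] \<in> G i" using step1.IH x0(1) by blast
  ultimately show ?case unfolding G_succ by (metis image_eqI)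
next
  case (step2 i)
  have lx: "length x = d" using length_grid step2.prems by blast
  have "T (i - 1) x \<in> G i" using step2.prems G_succ[of "i - 1"] by auto
  then have "(T (i - 1) x)[j := T (i - 1) x ! j + scale i] \<in> T (i - 1) ` G (i - 1)"
    using step2.IH G_succ[of "i - 1"] by simp
  then obtain y where y: "y \<in> G (i - 1)" "T (i - 1) y = (T (i - 1) x)[j := T (i - 1) x ! j + scale i]"
    by auto
  have "T (i - 1) (x[j := x ! j + scale (i - 1)]) = (T (i - 1) x)[j := T (i - 1) x ! j + scale i]"
    using scale_succ[of "i - 1"]
    by (intro nth_equalityI) (use assms(2) lx in \<open>auto simp: length_T nth_T nth_list_update\<close>)
  then have "y = x[j := x ! j + scale (i - 1)]"
    using T_inj[of "i - 1" y] y length_grid lx by (metis length_list_update)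
  then show ?case using y by simp
qed

end

lemma grid_system_doubling_grid:
  assumes "grid_system d G"
  obtains T b where "doubling_grid d G T b"
proof -
  have "\<forall>t. \<exists>c e. G (t + 1) =
      (\<lambda>x. map (\<lambda>j. 2 * (x ! j - c ! j) + c ! j + scale t / 2 * e ! j) [0..<d]) ` G t"
    using assms unfolding grid_system_def by blast
  then obtain c where "\<forall>t. \<exists>e. G (t + 1) =
      (\<lambda>x. map (\<lambda>j. 2 * (x ! j - c t ! j) + c t ! j + scale t / 2 * e ! j) [0..<d]) ` G t"
    by (erule choice[THEN exE])
  then obtain e where ce: "\<forall>t. G (t + 1) =
      (\<lambda>x. map (\<lambda>j. 2 * (x ! j - c t ! j) + c t ! j + scale t / 2 * e t ! j) [0..<d]) ` G t"
    by (erule choice[THEN exE])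
  define T where "T t x = map (\<lambda>j. 2 * (x ! j - c t ! j) + c t ! j + scale t / 2 * e t ! j) [0..<d]"
    for t x
  define b where "b t j = scale t / 2 * e t ! j - c t ! j" for t j
  have "doubling_grid d G T b"
  proof
    show "G 0 = {x. length x = d \<and> (\<forall>j<d. x ! j \<in> \<int>)}"
      using assms by (simp add: grid_system_def)
    show "G (t + 1) = T t ` G t" for t using ce by (simp add: T_def[abs_def])
    show "length (T t x) = d" for t x by (simp add: T_def)
    show "T t x ! j = 2 * x ! j + b t j" if "j < d" for t x j
      using that by (simp add: T_def b_def algebra_simps)
  qed
  then show ?thesis by (rule that)
qed

lemma grid_length:
  assumes "grid_system d G" "x \<in> G t"
  shows "length x = d"
proof -
  obtain T b where "doubling_grid d G T b" by (rule grid_system_doubling_grid[OF assms(1)])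
  then show ?thesis using assms(2) by (rule doubling_grid.length_grid)
qed

lemma grid_coord_diff:
  assumes "grid_system d G" "x \<in> G t" "y \<in> G t" "j < d"
  shows "\<exists>k::int. x ! j - y ! j = of_int k * scale t"
proof -
  obtain T b where "doubling_grid d G T b" by (rule grid_system_doubling_grid[OF assms(1)])
  then show ?thesis using assms(2-4) by (rule doubling_grid.grid_coord_diff)
qed

lemma grid_shift:
  assumes "grid_system d G" "x \<in> G t" "j < d"
  shows "x[j := x ! j + scale t] \<in> G t"
proof -
  obtain T b where "doubling_grid d G T b" by (rule grid_system_doubling_grid[OF assms(1)])
  then show ?thesis using assms(2,3) by (rule doubling_grid.grid_shift)
qed

lemma grid_coord_gap:
  assumes gs: "grid_system d G" and "g \<in> G t" "g' \<in> G t" "j < d" and gap: "g ! j - g' ! j > scale t"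
  shows "g ! j - g' ! j \<ge> 2 * scale t"
proof -
  obtain k :: int where k: "g ! j - g' ! j = of_int k * scale t"
    using grid_coord_diff[OF gs assms(2-4)] by blast
  have "of_int k * scale t > 1 * scale t" using gap k by simp
  then have "k \<ge> 2" using scale_pos[of t] by (simp only: mult_less_cancel_right) simp
  then have "of_int k * scale t \<ge> 2 * scale t" using scale_pos[of t] by (intro mult_right_mono) auto
  then show ?thesis using k by simp
qed

lemma avor_in_grid: "unique_voronoi d G P \<Longrightarrow> p \<in> P \<Longrightarrow> avor d G t p \<in> G t"
  unfolding unique_voronoi_def avor_def by (metis (mono_tags, lifting) theI')

lemma in_cell_avor: "unique_voronoi d G P \<Longrightarrow> p \<in> P \<Longrightarrow> in_cell d t (avor d G t p) p"
  unfolding unique_voronoi_def avor_def by (metis (mono_tags, lifting) theI')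

lemma avor_unique:
  "unique_voronoi d G P \<Longrightarrow> p \<in> P \<Longrightarrow> g \<in> G t \<Longrightarrow> in_cell d t g p \<Longrightarrow> avor d G t p = g"
  unfolding unique_voronoi_def avor_def by (rule the1_equality) blast+

lemma in_cell_coord:
  assumes "unique_voronoi d G P" "p \<in> P" "j < d"
  shows "avor d G t p ! j - scale t / 2 \<le> p ! j \<and> p ! j \<le> avor d G t p ! j + scale t / 2"
proof -
  have "\<bar>p ! j - avor d G t p ! j\<bar> \<le> scale t / 2"
    using in_cell_avor[OF assms(1,2), of t] assms(3) by (simp add: in_cell_def)
  then show ?thesis using abs_le_iff[of "p ! j - avor d G t p ! j" "scale t / 2"] by linarith
qed

text \<open>Otherwise the gap between the two grid points is at least 2 scale t, which puts q' on the
  boundary of its cell, and the grid point shifted by scale t is a second Voronoi centre of q'.\<close>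
lemma avor_coord_close:
  assumes gs: "grid_system d G" and uv: "unique_voronoi d G P"
    and q: "q \<in> P" and q': "q' \<in> P" and j: "j < d"
    and close: "q ! j - q' ! j \<le> scale t"
  shows "avor d G t q ! j - avor d G t q' ! j \<le> scale t"
proof (rule ccontr)
  let ?h = "scale t"
  define g where "g = avor d G t q"
  define g' where "g' = avor d G t q'"
  define g'' where "g'' = g'[j := g' ! j + ?h]"
  assume "\<not> ?thesis"
  then have "g ! j - g' ! j \<ge> 2 * ?h"
    using grid_coord_gap[OF gs avor_in_grid[OF uv q] avor_in_grid[OF uv q'] j]
    by (simp add: g_def g'_def)
  then have boundary: "q' ! j = g' ! j + ?h / 2"
    using in_cell_coord[OF uv q j, of t] in_cell_coord[OF uv q' j, of t] close
    unfolding g_def g'_def by linarith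
  have g': "g' \<in> G t" "length g' = d"
    using avor_in_grid[OF uv q'] grid_length[OF gs] unfolding g'_def by blast+
  have "in_cell d t g'' q'"
    unfolding in_cell_def
  proof (intro allI impI)
    fix i assume i: "i < d"
    show "\<bar>q' ! i - g'' ! i\<bar> \<le> ?h / 2"
    proof (cases "i = j")
      case True
      then show ?thesis using boundary g'(2) j scale_pos[of t] by (simp add: g''_def)
    next
      case False
      then show ?thesis using in_cell_avor[OF uv q', of t] i by (simp add: in_cell_def g''_def g'_def)
    qed
  qed
  then have "g' = g''"
    using avor_unique[OF uv q' grid_shift[OF gs g'(1) j]] unfolding g'_def g''_def by blast
  then have "g' ! j = g'' ! j" by (rule arg_cong)
  also have "g'' ! j = g' ! j + ?h" using j g'(2) by (simp add: g''_def)
  finally show False using scale_pos[of t] by simp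
qed

section \<open>Faces of the cubical complex\<close>

lemma is_faceD:
  assumes gs: "grid_system d G" and f: "is_face d G t f"
  shows "length (fst f) = d" "length (snd f) = d" "fst f \<in> G t"
    and "\<And>j. j < d \<Longrightarrow> snd f ! j = 0 \<or> snd f ! j = scale t"
    and "face_set f = {y. length y = d \<and> (\<forall>j<d. fst f ! j \<le> y ! j \<and> y ! j \<le> fst f ! j + snd f ! j)}"
    and "fdim f = card {j. j < d \<and> snd f ! j \<noteq> 0}"
proof -
  show l1: "length (fst f) = d" using f grid_length[OF gs] by (auto simp: is_face_def)
  show l2: "length (snd f) = d" using f by (simp add: is_face_def)
  show "fst f \<in> G t" using f by (simp add: is_face_def)
  show "\<And>j. j < d \<Longrightarrow> snd f ! j = 0 \<or> snd f ! j = scale t"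
    using f l2 by (auto simp: is_face_def dest!: nth_mem)
  show "face_set f = {y. length y = d \<and> (\<forall>j<d. fst f ! j \<le> y ! j \<and> y ! j \<le> fst f ! j + snd f ! j)}"
    by (simp add: face_set_def l1)
  show "fdim f = card {j. j < d \<and> snd f ! j \<noteq> 0}" by (simp add: fdim_def l2)
qed

lemma face_extent_nonneg:
  assumes "grid_system d G" "is_face d G t f" "j < d"
  shows "snd f ! j \<ge> 0"
  using is_faceD(4)[OF assms] scale_pos[of t] by auto

lemma corner_in_face_set:
  assumes gs: "grid_system d G" and f: "is_face d G t f"
  shows "fst f \<in> face_set f"
  using is_faceD[OF gs f] face_extent_nonneg[OF gs f] by auto

lemma face_set_subset_coords:
  assumes gs: "grid_system d G" and f: "is_face d G t f" and g: "is_face d G t g"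
    and sub: "face_set g \<subseteq> face_set f" and j: "j < d"
  shows "fst f ! j \<le> fst g ! j" "fst g ! j + snd g ! j \<le> fst f ! j + snd f ! j"
proof -
  note bf = is_faceD[OF gs f] and bg = is_faceD[OF gs g]
  have "fst g \<in> face_set g" by (rule corner_in_face_set[OF gs g])
  hence "fst g \<in> face_set f" using sub by blast
  thus "fst f ! j \<le> fst g ! j" using j bf(5) by auto
  let ?y = "(fst g)[j := fst g ! j + snd g ! j]"
  have "?y \<in> face_set g" using bg(1,5) j face_extent_nonneg[OF gs g]
    by (auto simp: nth_list_update)
  hence "?y \<in> face_set f" using sub by blast
  thus "fst g ! j + snd g ! j \<le> fst f ! j + snd f ! j" using j bf(5) bg(1) by auto
qed

lemma face_dirs_mono:
  assumes gs: "grid_system d G" and f: "is_face d G t f" and g: "is_face d G t g"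
    and sub: "face_set g \<subseteq> face_set f"
  shows "{j. j < d \<and> snd g ! j \<noteq> 0} \<subseteq> {j. j < d \<and> snd f ! j \<noteq> 0}"
proof
  fix j assume "j \<in> {j. j < d \<and> snd g ! j \<noteq> 0}"
  hence j: "j < d" and nz: "snd g ! j \<noteq> 0" by auto
  have "snd g ! j = scale t" using is_faceD(4)[OF gs g j] nz by auto
  moreover have "fst f ! j \<le> fst g ! j" "fst g ! j + snd g ! j \<le> fst f ! j + snd f ! j"
    using face_set_subset_coords[OF gs f g sub j] by auto
  ultimately have "snd f ! j \<ge> scale t" by linarith
  thus "j \<in> {j. j < d \<and> snd f ! j \<noteq> 0}" using j scale_pos[of t] by auto
qed

lemma face_eqI:
  assumes gs: "grid_system d G" and f: "is_face d G t f" and g: "is_face d G t g"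
    and sub: "face_set g \<subseteq> face_set f" and dim: "fdim f \<le> fdim g"
  shows "g = f"
proof -
  note bf = is_faceD[OF gs f] and bg = is_faceD[OF gs g]
  have idx: "{j. j < d \<and> snd g ! j \<noteq> 0} = {j. j < d \<and> snd f ! j \<noteq> 0}"
  proof -
    have i1: "{j. j < d \<and> snd g ! j \<noteq> 0} \<subseteq> {j. j < d \<and> snd f ! j \<noteq> 0}"
      by (rule face_dirs_mono[OF assms(1-4)])
    have "card {j. j < d \<and> snd g ! j \<noteq> 0} \<le> card {j. j < d \<and> snd f ! j \<noteq> 0}"
      by (rule card_mono[OF _ i1]) simp
    hence "card {j. j < d \<and> snd g ! j \<noteq> 0} = card {j. j < d \<and> snd f ! j \<noteq> 0}"
      using dim bf(6) bg(6) by simp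
    thus ?thesis by (intro card_subset_eq i1) simp_all
  qed
  have m: "snd g ! j = snd f ! j" if j: "j < d" for j
  proof -
    have "(snd g ! j \<noteq> 0) = (snd f ! j \<noteq> 0)" using idx j by blast
    thus ?thesis using bf(4)[OF j] bg(4)[OF j] by auto
  qed
  have x: "fst g ! j = fst f ! j" if j: "j < d" for j
    using face_set_subset_coords[OF gs f g sub j] m[OF j] by simp
  have "snd g = snd f" by (rule nth_equalityI) (use bf bg m in auto)
  moreover have "fst g = fst f" by (rule nth_equalityI) (use bf bg x in auto)
  ultimately show ?thesis by (simp add: prod_eq_iff)
qed

lemma fdim_less_Suc:
  assumes gs: "grid_system d G" and f: "is_face d G t f"
  shows "fdim f < Suc d"
proof -
  have "fdim f \<le> card {..<d}" unfolding is_faceD(6)[OF gs f] by (rule card_mono) auto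
  thus ?thesis by simp
qed

lemma is_face_clear_direction:
  assumes f: "is_face d G t f" and x: "x \<in> G t"
  shows "is_face d G t (x, (snd f)[j := 0])"
  using f x set_update_subset_insert[of "snd f" j 0] by (auto simp: is_face_def)

lemma fdim_clear_direction:
  assumes gs: "grid_system d G" and f: "is_face d G t f" and j: "j < d" and mj: "snd f ! j = scale t"
  shows "fdim (x, (snd f)[j := 0]) + 1 = fdim f"
proof -
  let ?J = "{i. i < d \<and> snd f ! i \<noteq> 0}"
  have l: "length (snd f) = d" by (rule is_faceD(2)[OF gs f])
  have j_in: "j \<in> ?J" using j mj scale_pos[of t] by simp
  have "{i. i < length ((snd f)[j := 0]) \<and> (snd f)[j := 0] ! i \<noteq> 0} = ?J - {j}"
    using l j by (auto simp: nth_list_update split: if_splits)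
  then have "fdim (x, (snd f)[j := 0]) = card (?J - {j})" by (simp add: fdim_def)
  moreover have "finite ?J" by simp
  then have "card ?J > 0" using j_in by (auto simp: card_gt_0_iff)
  then have "card (?J - {j}) + 1 = card ?J" using j_in by (simp add: card_Diff_singleton)
  ultimately show ?thesis using is_faceD(6)[OF gs f] by simp
qed

lemma lower_facet:
  assumes gs: "grid_system d G" and f: "is_face d G t f" and j: "j < d" and mj: "snd f ! j = scale t"
  shows "is_facet d G t (fst f, (snd f)[j := 0]) f"
    and "{y \<in> face_set f. y ! j = fst f ! j} \<subseteq> face_set (fst f, (snd f)[j := 0])"
proof -
  note bf = is_faceD[OF gs f]
  let ?m = "(snd f)[j := 0]"
  have "face_set (fst f, ?m) \<subseteq> face_set f"
  proof
    fix y assume "y \<in> face_set (fst f, ?m)"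
    then have y: "length y = d" "\<And>i. i < d \<Longrightarrow> fst f ! i \<le> y ! i \<and> y ! i \<le> fst f ! i + ?m ! i"
      using bf(1) by (auto simp: face_set_def)
    have "y ! i \<le> fst f ! i + snd f ! i" if "i < d" for i
      using y(2)[OF that] face_extent_nonneg[OF gs f that] bf(2) that by (cases "i = j") auto
    then show "y \<in> face_set f" using y bf(5) by auto
  qed
  then show "is_facet d G t (fst f, ?m) f"
    using is_face_clear_direction[OF f bf(3)] fdim_clear_direction[OF gs f j mj]
    by (simp add: is_facet_def)
  show "{y \<in> face_set f. y ! j = fst f ! j} \<subseteq> face_set (fst f, ?m)"
  proof
    fix y assume "y \<in> {y \<in> face_set f. y ! j = fst f ! j}"
    then have y: "length y = d" "\<And>i. i < d \<Longrightarrow> fst f ! i \<le> y ! i \<and> y ! i \<le> fst f ! i + snd f ! i"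
      "y ! j = fst f ! j"
      using bf(5) by auto
    have "fst f ! i \<le> y ! i \<and> y ! i \<le> fst f ! i + ?m ! i" if "i < d" for i
      using y(2)[OF that] y(3) bf(2) that by (cases "i = j") auto
    then show "y \<in> face_set (fst f, ?m)" using y bf(1) by (auto simp: face_set_def)
  qed
qed

lemma upper_facet:
  assumes gs: "grid_system d G" and f: "is_face d G t f" and j: "j < d" and mj: "snd f ! j = scale t"
  shows "is_facet d G t ((fst f)[j := fst f ! j + scale t], (snd f)[j := 0]) f"
    and "{y \<in> face_set f. y ! j = fst f ! j + scale t} \<subseteq>
      face_set ((fst f)[j := fst f ! j + scale t], (snd f)[j := 0])"
proof -
  note bf = is_faceD[OF gs f]
  let ?x = "(fst f)[j := fst f ! j + scale t]" and ?m = "(snd f)[j := 0]"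
  have "face_set (?x, ?m) \<subseteq> face_set f"
  proof
    fix y assume "y \<in> face_set (?x, ?m)"
    then have y: "length y = d" "\<And>i. i < d \<Longrightarrow> ?x ! i \<le> y ! i \<and> y ! i \<le> ?x ! i + ?m ! i"
      using bf(1) by (auto simp: face_set_def)
    have "fst f ! i \<le> y ! i \<and> y ! i \<le> fst f ! i + snd f ! i" if "i < d" for i
      using y(2)[OF that] face_extent_nonneg[OF gs f that] bf(1,2) that mj scale_pos[of t]
      by (cases "i = j") auto
    then show "y \<in> face_set f" using y bf(5) by auto
  qed
  then show "is_facet d G t (?x, ?m) f"
    using is_face_clear_direction[OF f grid_shift[OF gs bf(3) j]] fdim_clear_direction[OF gs f j mj]
    by (simp add: is_facet_def)
  show "{y \<in> face_set f. y ! j = fst f ! j + scale t} \<subseteq> face_set (?x, ?m)"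
  proof
    fix y assume "y \<in> {y \<in> face_set f. y ! j = fst f ! j + scale t}"
    then have y: "length y = d" "\<And>i. i < d \<Longrightarrow> fst f ! i \<le> y ! i \<and> y ! i \<le> fst f ! i + snd f ! i"
      "y ! j = fst f ! j + scale t"
      using bf(5) by auto
    have "?x ! i \<le> y ! i \<and> y ! i \<le> ?x ! i + ?m ! i" if "i < d" for i
      using y(2)[OF that] y(3) bf(1,2) that by (cases "i = j") auto
    then show "y \<in> face_set (?x, ?m)" using y bf(1) by (auto simp: face_set_def)
  qed
qed

lemma grid_point_face_coord:
  assumes gs: "grid_system d G" and f: "is_face d G t f" and j: "j < d"
    and v: "v \<in> G t" "v \<in> face_set f"
  shows "v ! j = fst f ! j \<or> v ! j = fst f ! j + scale t"
proof -
  note bf = is_faceD[OF gs f]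
  have h: "scale t > 0" by (rule scale_pos)
  obtain k :: int where k: "v ! j - fst f ! j = of_int k * scale t"
    using grid_coord_diff[OF gs v(1) bf(3) j] by blast
  have "fst f ! j \<le> v ! j" "v ! j \<le> fst f ! j + snd f ! j" using v(2) bf(5) j by auto
  moreover have "snd f ! j \<le> scale t" using bf(4)[OF j] h by auto
  ultimately have "of_int k * scale t \<ge> 0 * scale t" "of_int k * scale t \<le> 1 * scale t"
    using k by linarith+
  then have "of_int k \<ge> (0::real)" "of_int k \<le> (1::real)" using h
    by (simp_all only: mult_le_cancel_right)
  then have "k = 0 \<or> k = 1" by linarith
  then show ?thesis using k by auto
qed

text \<open>As f \<inter> V lies in no facet of f, it meets both facets of f across each direction of f.\<close>
lemma spanned_face_coord_bounds:
  assumes gs: "grid_system d G" and sp: "spanned d G t V f" and VG: "V \<subseteq> G t"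
    and j: "j < d" and y: "y \<in> face_set f"
  shows "\<exists>v1\<in>face_set f \<inter> V. \<exists>v2\<in>face_set f \<inter> V. v1 ! j \<le> y ! j \<and> y ! j \<le> v2 ! j"
proof -
  have f: "is_face d G t f" using sp by (simp add: spanned_def)
  note bf = is_faceD[OF gs f]
  have ne: "face_set f \<inter> V \<noteq> {}"
    and not_facet: "\<And>g. is_facet d G t g f \<Longrightarrow> \<not> face_set f \<inter> V \<subseteq> face_set g"
    using sp by (auto simp: spanned_def)
  have yb: "fst f ! j \<le> y ! j" "y ! j \<le> fst f ! j + snd f ! j" using y bf(5) j by auto
  show ?thesis
  proof (cases "snd f ! j = 0")
    case True
    obtain v where v: "v \<in> face_set f \<inter> V" using ne by blast
    then have "v ! j = y ! j" using yb True bf(5) j by fastforce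
    then show ?thesis using v by (intro bexI[of _ v]) auto
  next
    case False
    then have mj: "snd f ! j = scale t" using bf(4)[OF j] by auto
    have vals: "v ! j = fst f ! j \<or> v ! j = fst f ! j + scale t" if "v \<in> face_set f \<inter> V" for v
      using grid_point_face_coord[OF gs f j] that VG by blast
    obtain v1 where v1: "v1 \<in> face_set f \<inter> V" "v1 ! j = fst f ! j"
      using not_facet[OF upper_facet(1)[OF gs f j mj]] upper_facet(2)[OF gs f j mj] vals by blast
    obtain v2 where v2: "v2 \<in> face_set f \<inter> V" "v2 ! j = fst f ! j + scale t"
      using not_facet[OF lower_facet(1)[OF gs f j mj]] lower_facet(2)[OF gs f j mj] vals by blast
    have "v1 ! j \<le> y ! j \<and> y ! j \<le> v2 ! j" using v1(2) v2(2) yb mj by simp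
    then show ?thesis using v1(1) v2(1) by blast
  qed
qed

lemma spanned_mono:
  assumes "spanned d G t V f" "V \<subseteq> V'"
  shows "spanned d G t V' f"
proof -
  have f: "is_face d G t f" "face_set f \<inter> V \<noteq> {}"
    "\<And>g. is_facet d G t g f \<Longrightarrow> \<not> face_set f \<inter> V \<subseteq> face_set g"
    using assms(1) unfolding spanned_def by auto
  have "face_set f \<inter> V \<subseteq> face_set f \<inter> V'" using assms(2) by auto
  hence "face_set f \<inter> V' \<noteq> {}" "\<And>g. is_facet d G t g f \<Longrightarrow> \<not> face_set f \<inter> V' \<subseteq> face_set g"
    using f by blast+
  thus ?thesis using f(1) unfolding spanned_def by blast
qed

lemma smallest_active_eq:
  assumes gs: "grid_system d G" and lo: "linear_order_on (active_faces d G P t) r"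
    and fa: "f \<in> active_faces d G P t" and fr: "f \<in> \<rho>"
    and sub: "\<forall>g\<in>\<rho>. face_set g \<subseteq> face_set f"
  shows "smallest_active d G P r t \<rho> = f"
proof -
  let ?cands = "{E \<in> active_faces d G P t. \<forall>g\<in>\<rho>. face_set g \<subseteq> face_set E}"
  have is_face: "is_face d G t E" if "E \<in> active_faces d G P t" for E
    using that by (simp add: active_faces_def spanned_def)
  have above: "fdim f < fdim E \<or> E = f" if "E \<in> ?cands" for E
  proof (cases "fdim E \<le> fdim f")
    case True
    have "face_set f \<subseteq> face_set E" "is_face d G t E" using that fr is_face by auto
    then have "f = E" using face_eqI[OF gs _ is_face[OF fa]] True by blast
    then show ?thesis by simp
  qed simp
  have "refl_on (active_faces d G P t) r"
    using lo unfolding linear_order_on_def partial_order_on_def preorder_on_def by blast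
  then have "(f, f) \<in> r" using fa by (rule refl_onD)
  then show ?thesis
    unfolding smallest_active_def Let_def
  proof (intro the_equality)
    show "f \<in> ?cands \<and> (\<forall>E\<in>?cands. fdim f < fdim E \<or> (fdim f = fdim E \<and> (f, E) \<in> r))"
      using fa sub above \<open>(f, f) \<in> r\<close> by blast
    fix E assume E: "E \<in> ?cands \<and> (\<forall>E'\<in>?cands. fdim E < fdim E' \<or> (fdim E = fdim E' \<and> (E, E') \<in> r))"
    have "f \<in> ?cands" using fa sub by blast
    then have "fdim E < fdim f \<or> fdim E = fdim f \<and> (E, f) \<in> r" using E by blast
    then have "fdim E \<le> fdim f" by auto
    then show "E = f" using above[of E] E by auto
  qed
qed

lemma ex_max_spanned:
  assumes gs: "grid_system d G" and sp: "spanned d G t V f"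
  shows "\<exists>f'. max_spanned d G t V f' \<and> face_set f \<subseteq> face_set f'"
proof -
  let ?P = "\<lambda>g. spanned d G t V g \<and> face_set f \<subseteq> face_set g"
  have "\<forall>g. ?P g \<longrightarrow> fdim g < Suc d" using fdim_less_Suc[OF gs] by (auto simp: spanned_def)
  from Lattices_Big.ex_has_greatest_nat[of ?P f fdim, OF _ this]
  obtain g where g: "?P g" "\<forall>y. ?P y \<longrightarrow> fdim y \<le> fdim g" using sp by blast
  have "max_spanned d G t V g"
    unfolding max_spanned_def
  proof (intro conjI notI)
    show "spanned d G t V g" using g by blast
    assume "\<exists>f'. spanned d G t V f' \<and> face_set g \<subset> face_set f'"
    then obtain f' where f': "spanned d G t V f'" "face_set g \<subset> face_set f'" by blast
    have "?P f'" using f' g by blast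
    hence "fdim f' \<le> fdim g" using g by blast
    moreover have i1: "is_face d G t f'" using f' by (simp add: spanned_def)
    moreover have i2: "is_face d G t g" using g by (simp add: spanned_def)
    moreover have "face_set g \<subseteq> face_set f'" using f'(2) by (rule psubset_imp_subset)
    ultimately have "g = f'" using face_eqI[OF gs i1 i2] by blast
    thus False using f' by blast
  qed
  thus ?thesis using g by blast
qed

lemma sd_subset_Xcplx:
  assumes gs: "grid_system d G" and sp: "spanned d G t (avor d G t ` P) f"
    and rho: "\<rho> \<in> sd d G t f"
  shows "\<rho> \<in> Xcplx d G P t"
proof -
  obtain f' where f': "max_spanned d G t (avor d G t ` P) f'" "face_set f \<subseteq> face_set f'"
    using ex_max_spanned[OF gs sp] by blast
  have "\<rho> \<in> sd d G t f'" using rho f'(2) unfolding sd_def by blast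
  thus ?thesis using f'(1) unfolding Xcplx_def bspan_def by blast
qed

lemma sd_nonempty_subset:
  assumes "\<rho> \<in> sd d G t f" "\<rho>' \<subseteq> \<rho>" "\<rho>' \<noteq> {}"
  shows "\<rho>' \<in> sd d G t f"
  using assms finite_subset[OF assms(2)] unfolding sd_def by blast

lemma supp_c2_flag_through:
  assumes gs: "grid_system d G" and lo: "linear_order_on (active_faces d G P t) r"
    and c2c: "carried (Xcplx d G P t) c2 (C2 d G P r t)"
    and sp: "spanned d G t (avor d G t ` P) f" and \<rho>: "\<rho> \<in> sd d G t f" "f \<in> \<rho>"
    and \<nu>: "\<nu> \<in> supp (c2 \<rho>)"
  shows "\<nu> \<subseteq> {p \<in> P. avor d G t p \<in> face_set f}"
proof -
  have "smallest_active d G P r t \<rho> = f"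
    using \<rho> by (intro smallest_active_eq[OF gs lo _ \<rho>(2)]) (auto simp: sd_def active_faces_def sp)
  moreover have "\<nu> \<in> C2 d G P r t \<rho>"
    using c2c sd_subset_Xcplx[OF gs sp \<rho>(1)] \<nu> by (auto simp: carried_def)
  ultimately show ?thesis by (simp add: C2_def full_simplex_def)
qed

text \<open>If f is not in the flag \<tau>, then \<tau> is the facet opposite f of the flag insert f \<tau>, and the chain
  map identity for c2 on that flag isolates c2 \<tau>: all other terms are carried by f.\<close>
lemma supp_c2_flag:
  fixes c2 :: "face set \<Rightarrow> point set \<Rightarrow> 'k::field"
  assumes gs: "grid_system d G" and lo: "linear_order_on (active_faces d G P t) r"
    and c2m: "aug_chain_map (Xcplx d G P t) L c2"
    and c2c: "carried (Xcplx d G P t) c2 (C2 d G P r t)"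
    and sp: "spanned d G t (avor d G t ` P) f" and \<tau>: "\<tau> \<in> sd d G t f"
    and \<mu>: "\<mu> \<in> supp (c2 \<tau>)"
  shows "\<mu> \<subseteq> {p \<in> P. avor d G t p \<in> face_set f}" (is "_ \<subseteq> ?F")
proof (cases "f \<in> \<tau>")
  case True
  then show ?thesis using supp_c2_flag_through[OF gs lo c2c sp \<tau> _ \<mu>] by blast
next
  case False
  show ?thesis
  proof (rule ccontr)
    assume outside: "\<not> \<mu> \<subseteq> ?F"
    define \<rho> where "\<rho> = insert f \<tau>"
    have \<rho>: "\<rho> \<in> sd d G t f" "f \<in> \<rho>"
      using \<tau> sp by (auto simp: sd_def \<rho>_def spanned_def)
    have "bdc (c2 \<rho>) \<mu> = 0"
      using supp_c2_flag_through[OF gs lo c2c sp \<rho>] outside by (rule bdc_eq_0_outside)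
    moreover have "bdc (c2 \<rho>) = ext c2 (bd \<rho>)"
      using aug_chain_mapD(4)[OF c2m] sd_subset_Xcplx[OF gs sp \<rho>(1)] by blast
    moreover have "c2 (\<rho> - {w}) \<mu> = 0" if "w \<in> \<rho>" "w \<noteq> f" for w
    proof -
      have "\<rho> - {w} \<in> sd d G t f" using \<rho> that by (intro sd_nonempty_subset[OF \<rho>(1)]) auto
      moreover have "f \<in> \<rho> - {w}" using \<rho>(2) that(2) by simp
      ultimately have "\<mu> \<notin> supp (c2 (\<rho> - {w}))"
        using supp_c2_flag_through[OF gs lo c2c sp] outside by blast
      then show ?thesis by (simp add: supp_def)
    qed
    then obtain i where "ext c2 (bd \<rho>) \<mu> = (-1)^i * c2 \<tau> \<mu>"
      using ext_bd_single_facet[of \<rho> f c2 \<mu>] \<rho> False by (auto simp: sd_def \<rho>_def)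
    ultimately show False using \<mu> by (simp add: supp_def)
  qed
qed

section \<open>The vertex box carrier\<close>

definition vertex_box :: "nat \<Rightarrow> (int \<Rightarrow> point set) \<Rightarrow> point set \<Rightarrow> int \<Rightarrow> point set \<Rightarrow> point set" where
  "vertex_box d G P t \<sigma> = {p \<in> P. \<forall>j<d. \<exists>q1\<in>\<sigma>. \<exists>q2\<in>\<sigma>.
      avor d G t q1 ! j \<le> avor d G t p ! j \<and> avor d G t p ! j \<le> avor d G t q2 ! j}"

lemma subset_vertex_box: "\<sigma> \<subseteq> P \<Longrightarrow> \<sigma> \<subseteq> vertex_box d G P t \<sigma>"
  unfolding vertex_box_def by blast

lemma vertex_box_mono: "\<nu> \<subseteq> \<sigma> \<Longrightarrow> vertex_box d G P t \<nu> \<subseteq> vertex_box d G P t \<sigma>"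
  unfolding vertex_box_def by blast

lemma finite_vertex_box: "finite P \<Longrightarrow> finite (vertex_box d G P t \<sigma>)"
  unfolding vertex_box_def by simp

lemma vertex_box_coord_diff:
  assumes gs: "grid_system d G" and uv: "unique_voronoi d G P" and lenP: "\<forall>p\<in>P. length p = d"
    and \<sigma>: "\<sigma> \<in> Rinf P (scale s)"
    and p: "p \<in> vertex_box d G P (s + 1) \<sigma>" and p': "p' \<in> vertex_box d G P (s + 1) \<sigma>"
    and j: "j < d"
  shows "p ! j - p' ! j \<le> 2 * scale (s + 1)"
proof -
  let ?a = "avor d G (s + 1)" and ?h = "scale (s + 1)"
  obtain q2 where q2: "q2 \<in> \<sigma>" "?a p ! j \<le> ?a q2 ! j" using p j unfolding vertex_box_def by blast
  obtain q1 where q1: "q1 \<in> \<sigma>" "?a q1 ! j \<le> ?a p' ! j" using p' j unfolding vertex_box_def by blast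
  have P: "p \<in> P" "p' \<in> P" "q1 \<in> P" "q2 \<in> P"
    using p p' q1(1) q2(1) \<sigma> unfolding vertex_box_def Rinf_def by blast+
  have "j < length q2" using j lenP P(4) by simp
  then have "\<bar>q2 ! j - q1 ! j\<bar> \<le> 2 * scale s"
    using \<sigma> q1(1) q2(1) unfolding Rinf_def by blast
  then have "q2 ! j - q1 ! j \<le> ?h" unfolding scale_succ by (rule abs_le_D1)
  then have "?a q2 ! j - ?a q1 ! j \<le> ?h" by (rule avor_coord_close[OF gs uv P(4,3) j])
  moreover have "p ! j \<le> ?a p ! j + ?h / 2" "?a p' ! j - ?h / 2 \<le> p' ! j"
    using in_cell_coord[OF uv P(1) j] in_cell_coord[OF uv P(2) j] by blast+
  ultimately show ?thesis using q1(2) q2(2) by linarith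
qed

lemma vertex_box_in_Rinf:
  assumes gs: "grid_system d G" and uv: "unique_voronoi d G P" and lenP: "\<forall>p\<in>P. length p = d"
    and \<sigma>: "\<sigma> \<in> Rinf P (scale s)" and T: "T \<noteq> {}" "T \<subseteq> vertex_box d G P (s + 1) \<sigma>"
  shows "T \<in> Rinf P (scale (s + 1))"
proof -
  have "T \<subseteq> P" using T unfolding vertex_box_def by blast
  moreover have "\<bar>p ! j - q ! j\<bar> \<le> 2 * scale (s + 1)" if "p \<in> T" "q \<in> T" "j < length p" for p q j
  proof -
    have "p \<in> vertex_box d G P (s + 1) \<sigma>" "q \<in> vertex_box d G P (s + 1) \<sigma>" "j < d"
      using that T(2) lenP \<open>T \<subseteq> P\<close> by auto
    then have "p ! j - q ! j \<le> 2 * scale (s + 1)" "q ! j - p ! j \<le> 2 * scale (s + 1)"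
      using vertex_box_coord_diff[OF gs uv lenP \<sigma>] by blast+
    then show ?thesis by (simp add: abs_le_iff)
  qed
  ultimately show ?thesis using T(1) unfolding Rinf_def by blast
qed

lemma supp_c2_in_vertex_box:
  fixes c2 :: "face set \<Rightarrow> point set \<Rightarrow> 'k::field"
  assumes gs: "grid_system d G" and uv: "unique_voronoi d G P"
    and lo: "linear_order_on (active_faces d G P t) r"
    and c2m: "aug_chain_map (Xcplx d G P t) L c2"
    and c2c: "carried (Xcplx d G P t) c2 (C2 d G P r t)"
    and \<sigma>: "\<sigma> \<subseteq> P" and \<tau>: "\<tau> \<in> C1 d G t \<sigma>" and \<mu>: "\<mu> \<in> supp (c2 \<tau>)"
  shows "\<mu> \<subseteq> vertex_box d G P t \<sigma>"
proof -
  obtain f where f: "max_spanned d G t (avor d G t ` \<sigma>) f" "\<tau> \<in> sd d G t f"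
    using \<tau> unfolding C1_def bspan_def by blast
  have sp: "spanned d G t (avor d G t ` \<sigma>) f" using f(1) by (simp add: max_spanned_def)
  have "\<mu> \<subseteq> {p \<in> P. avor d G t p \<in> face_set f}"
    using spanned_mono[OF sp image_mono[OF \<sigma>]] f(2) \<mu> by (rule supp_c2_flag[OF gs lo c2m c2c])
  moreover have "{p \<in> P. avor d G t p \<in> face_set f} \<subseteq> vertex_box d G P t \<sigma>"
  proof
    fix p assume p: "p \<in> {p \<in> P. avor d G t p \<in> face_set f}"
    have VG: "avor d G t ` \<sigma> \<subseteq> G t" using avor_in_grid[OF uv] \<sigma> by blast
    have "\<exists>q1\<in>\<sigma>. \<exists>q2\<in>\<sigma>. avor d G t q1 ! j \<le> avor d G t p ! j \<and> avor d G t p ! j \<le> avor d G t q2 ! j"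
      if j: "j < d" for j
    proof -
      obtain v1 v2 where "v1 \<in> avor d G t ` \<sigma>" "v2 \<in> avor d G t ` \<sigma>"
        "v1 ! j \<le> avor d G t p ! j" "avor d G t p ! j \<le> v2 ! j"
        using spanned_face_coord_bounds[OF gs sp VG j] p by blast
      then show ?thesis by blast
    qed
    then show "p \<in> vertex_box d G P t \<sigma>" using p unfolding vertex_box_def by blast
  qed
  ultimately show ?thesis by blast
qed

lemma acyclic_carrier_vertex_box:
  fixes c1 :: "point set \<Rightarrow> face set \<Rightarrow> 'k::field" and c2 :: "face set \<Rightarrow> point set \<Rightarrow> 'k"
  assumes gs: "grid_system d G" and finP: "finite P" and lenP: "\<forall>p\<in>P. length p = d"
    and uv: "unique_voronoi d G P" and lo: "linear_order_on (active_faces d G P (s + 1)) r"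
    and c1m: "aug_chain_map (Rinf P (scale s)) (Xcplx d G P (s + 1)) c1"
    and c1c: "carried (Rinf P (scale s)) c1 (C1 d G (s + 1))"
    and c2m: "aug_chain_map (Xcplx d G P (s + 1)) (Rinf P (scale (s + 1))) c2"
    and c2c: "carried (Xcplx d G P (s + 1)) c2 (C2 d G P r (s + 1))"
  shows "acyclic_carrier (Rinf P (scale s)) (Rinf P (scale (s + 1))) (\<lambda>\<sigma>. ext c2 (c1 \<sigma>))
    (vertex_box d G P (s + 1))"
proof
  have in_P: "\<sigma> \<subseteq> P" if "\<sigma> \<in> Rinf P (scale s)" for \<sigma> using that by (simp add: Rinf_def)
  show K: "simplicial_complex (Rinf P (scale s))" by (rule simplicial_complex_Rinf[OF finP])
  show "aug_chain_map (Rinf P (scale s)) (Rinf P (scale (s + 1))) (\<lambda>\<sigma>. ext c2 (c1 \<sigma>))"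
    using K c1m c2m by (rule aug_chain_map_comp)
  show "\<sigma> \<subseteq> vertex_box d G P (s + 1) \<sigma>" if "\<sigma> \<in> Rinf P (scale s)" for \<sigma>
    using in_P[OF that] by (rule subset_vertex_box)
  show "vertex_box d G P (s + 1) \<nu> \<subseteq> vertex_box d G P (s + 1) \<sigma>"
    if "\<sigma> \<in> Rinf P (scale s)" "\<nu> \<in> Rinf P (scale s)" "\<nu> \<subseteq> \<sigma>" for \<sigma> \<nu>
    using that(3) by (rule vertex_box_mono)
  show "finite (vertex_box d G P (s + 1) \<sigma>)" for \<sigma>
    using finP by (rule finite_vertex_box)
  show "T \<in> Rinf P (scale (s + 1))"
    if "\<sigma> \<in> Rinf P (scale s)" "T \<noteq> {}" "T \<subseteq> vertex_box d G P (s + 1) \<sigma>" for \<sigma> T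
    using gs uv lenP that by (rule vertex_box_in_Rinf)
  show "\<mu> \<subseteq> vertex_box d G P (s + 1) \<sigma>"
    if \<sigma>: "\<sigma> \<in> Rinf P (scale s)" and \<mu>: "\<mu> \<in> supp (ext c2 (c1 \<sigma>))" for \<sigma> \<mu>
  proof -
    obtain \<tau> where \<tau>: "\<tau> \<in> supp (c1 \<sigma>)" "\<mu> \<in> supp (c2 \<tau>)" using \<mu> supp_ext[of c2 "c1 \<sigma>"] by blast
    have "\<tau> \<in> C1 d G (s + 1) \<sigma>" using c1c \<sigma> \<tau>(1) by (auto simp: carried_def)
    then show ?thesis by (rule supp_c2_in_vertex_box[OF gs uv lo c2m c2c in_P[OF \<sigma>] _ \<tau>(2)])
  qed
qed

theorem lemma9:
  fixes d :: nat and G :: "int \<Rightarrow> point set" and P :: "point set" and s :: int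
    and r :: "(face \<times> face) set"
    and c1 :: "point set \<Rightarrow> face set \<Rightarrow> 'k::field"
    and c2 :: "face set \<Rightarrow> point set \<Rightarrow> 'k"
  assumes "grid_system d G"
    and "finite P" and "\<forall>p\<in>P. length p = d"
    and "unique_voronoi d G P"
    and "linear_order_on (active_faces d G P (s + 1)) r"
    and "aug_chain_map (Rinf P (scale s)) (Xcplx d G P (s + 1)) c1"
    and "carried (Rinf P (scale s)) c1 (C1 d G (s + 1))"
    and "aug_chain_map (Xcplx d G P (s + 1)) (Rinf P (scale (s + 1))) c2"
    and "carried (Xcplx d G P (s + 1)) c2 (C2 d G P r (s + 1))"
  shows "\<forall>n z. is_chain (Rinf P (scale s)) z \<and> homog n z \<and> bdc z = (\<lambda>_. 0) \<longrightarrow>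
           (\<exists>w. is_chain (Rinf P (scale (s + 1))) w \<and> homog (Suc n) w \<and>
                bdc w = (\<lambda>\<tau>. z \<tau> - ext c2 (ext c1 z) \<tau>))"
proof (intro allI impI)
  fix n and z :: "point set \<Rightarrow> 'k"
  assume z: "is_chain (Rinf P (scale s)) z \<and> homog n z \<and> bdc z = (\<lambda>_. 0)"
  interpret acyclic_carrier "Rinf P (scale s)" "Rinf P (scale (s + 1))" "\<lambda>\<sigma>. ext c2 (c1 \<sigma>)"
    "vertex_box d G P (s + 1)"
    using assms by (rule acyclic_carrier_vertex_box)
  have "\<exists>w. is_chain (Rinf P (scale (s + 1))) w \<and> homog (Suc n) w \<and>
      bdc w = (\<lambda>\<tau>. z \<tau> - ext (\<lambda>\<sigma>. ext c2 (c1 \<sigma>)) z \<tau>)"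
    by (rule cycle_homologous_to_image) (use z in auto)
  moreover have "ext (\<lambda>\<sigma>. ext c2 (c1 \<sigma>)) z = ext c2 (ext c1 z)"
    using z aug_chain_mapD(2)[OF assms(6)] by (intro ext_ext[symmetric]) (auto simp: is_chain_def)
  ultimately show "\<exists>w. is_chain (Rinf P (scale (s + 1))) w \<and> homog (Suc n) w \<and>
      bdc w = (\<lambda>\<tau>. z \<tau> - ext c2 (ext c1 z) \<tau>)"
    by simp
qed

end
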